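(* Let $d\ge2$, $r=\sin\!\left(\frac{2\pi}{(d-1)d^2}\right)$, $0<\alpha<1$, and $$\beta=\frac{r^{\frac{(d-1)d}{2}}\left(\frac{d-1}{2d}\right)^d\frac{2}{d-1}}{\prod_{k=1}^{d-1}(r^k+1)}.$$ There is a map $R:\mathbb R^{6d-3}\to\mathcal P_d$ (depending only on $d$ and $\alpha$) such that for every $p\in\mathcal P_d$ with $\|p\|_2=1$ and every $\epsilon\in\mathbb R^{6d-3}$ with $\|\epsilon\|_\infty\le\frac{\alpha\beta^2}{2d-1}$, setting $\tilde C=\frac{(1+\sqrt2)(2d-1)\|\epsilon\|_\infty+d}{\beta^2(1-\alpha)}$, the polynomial $\tilde p=R(\widetilde{\mathcal A}(p,\epsilon))$ satisfies, for some $c_0$ with $|c_0|=1$, $$\|\tilde p-c_0p\|_2\le\left(\frac{2+\sqrt2}{\beta^2(1-\alpha)}\,\frac{d-d\tilde C-1+\tilde C^d}{1-\tilde C}\sqrt d+\frac{1-\tilde C^d}{2\beta\sqrt{\frac1{\sqrt d}(1-\alpha)}}\right)\frac{d(2d-1)}{1-\tilde C}\,\|\epsilon\|_\infty.$$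
   Context: $\mathcal P_d$ is the space of complex polynomials of degree at most $d-1$ on the unit circle with inner product $\langle p,q\rangle=\frac1{2\pi}\int_0^{2\pi}p(e^{it})\overline{q(e^{it})}dt$ ($\|p\|_2$ equals the Euclidean norm of the coefficient vector). Let $\omega=e^{2\pi i/(2d-1)}$, $\nu=e^{2\pi i/d}$. The map $\mathcal A:\mathcal P_d\to\mathbb R^{6d-3}$ is $(\mathcal A(p))_j=|p(\omega^j)|^2$ ($1\le j\le 2d-1$), $|p(\omega^j)-p(\omega^j\nu)|^2$ ($2d\le j\le4d-2$), $|p(\omega^j)-ip(\omega^j\nu)|^2$ ($4d-1\le j\le 6d-3$), and $\widetilde{\mathcal A}(p,\epsilon)=\mathcal A(p)+\epsilon$; $\|\epsilon\|_\infty=\max_j|\epsilon_j|$. *)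

theory Defs
  imports "HOL-Analysis.Analysis"
begin

text \<open>A polynomial p in P_d is represented by its coefficient function
  c :: nat => complex with c k = 0 for k >= d; p(z) = sum_{k<d} c k z^k.\<close>

definition in_Pd :: "nat \<Rightarrow> (nat \<Rightarrow> complex) \<Rightarrow> bool" where
  "in_Pd d c \<longleftrightarrow> (\<forall>k\<ge>d. c k = 0)"

definition peval :: "nat \<Rightarrow> (nat \<Rightarrow> complex) \<Rightarrow> complex \<Rightarrow> complex" where
  "peval d c z = (\<Sum>k<d. c k * z ^ k)"

definition pnorm2 :: "nat \<Rightarrow> (nat \<Rightarrow> complex) \<Rightarrow> real" where
  "pnorm2 d c = sqrt (\<Sum>k<d. (cmod (c k))\<^sup>2)"

definition omega :: "nat \<Rightarrow> complex" where
  "omega d = cis (2 * pi / real (2 * d - 1))"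

definition nu :: "nat \<Rightarrow> complex" where
  "nu d = cis (2 * pi / real d)"

text \<open>The measurement map A, vectors of R^(6d-3) are represented as
  functions nat => real on the index set {1..6d-3} (value 0 outside).\<close>
definition meas :: "nat \<Rightarrow> (nat \<Rightarrow> complex) \<Rightarrow> nat \<Rightarrow> real" where
  "meas d c j =
     (if 1 \<le> j \<and> j \<le> 2*d - 1 then (cmod (peval d c (omega d ^ j)))\<^sup>2
      else if 2*d \<le> j \<and> j \<le> 4*d - 2 then
        (cmod (peval d c (omega d ^ j) - peval d c (omega d ^ j * nu d)))\<^sup>2
      else if 4*d - 1 \<le> j \<and> j \<le> 6*d - 3 then
        (cmod (peval d c (omega d ^ j) - \<i> * peval d c (omega d ^ j * nu d)))\<^sup>2
      else 0)"

definition noisy_meas :: "nat \<Rightarrow> (nat \<Rightarrow> complex) \<Rightarrow> (nat \<Rightarrow> real) \<Rightarrow> nat \<Rightarrow> real" where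
  "noisy_meas d c eps j = (if 1 \<le> j \<and> j \<le> 6*d - 3 then meas d c j + eps j else 0)"

definition supnorm :: "nat \<Rightarrow> (nat \<Rightarrow> real) \<Rightarrow> real" where
  "supnorm d eps = Max ((\<lambda>j. \<bar>eps j\<bar>) ` {1..6*d - 3})"

definition rconst :: "nat \<Rightarrow> real" where
  "rconst d = sin (2 * pi / (real (d - 1) * real d ^ 2))"

definition betaconst :: "nat \<Rightarrow> real" where
  "betaconst d = (let r = rconst d in
     r powr (real ((d - 1) * d) / 2) * ((real d - 1) / (2 * real d)) ^ d * (2 / (real d - 1))
     / (\<Prod>k\<in>{1..d-1}. r ^ k + 1))"

end

theory Submission
  imports Defs "HOL-Computational_Algebra.Fundamental_Theorem_Algebra" "HOL-Library.Real_Mod"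
begin

text \<open>Both |p(z)|^2 and p(z) * cnj (p(z * nu d)) are trigonometric polynomials of bidegree
  below d, so they are determined by their values at the (2d-1)-st roots of unity; these values
  are the first block of measurements, respectively are obtained from all three blocks by
  polarization.
  Interpolating the noisy values amplifies the noise by at most 2d-1.

  Since p has fewer than d roots, some coset of the d-th roots of unity inside the (d*d)-th roots
  of unity stays angularly away from all of them, and there |p| is at least beta; the coset that
  maximizes the estimated minimum of |p|^2 is then good as well. Along it the moduli of p are read
  off the first estimate, while the phases are propagated from point to point using the second,
  losing a factor 2 sqrt d / (beta sqrt (1 - alpha)) per step. An inverse discrete Fourier
  transform returns the coefficients, and Parseval's identity turns the pointwise errors into the
  coefficient error.
  The resulting geometric bound is finally compared with the (much weaker) stated one.\<close>

section \<open>Sums of powers of roots of unity\<close>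

lemma norm_eq_1_imp_mult_cnj: "cmod z = 1 \<Longrightarrow> z * cnj z = 1"
  by (metis complex_norm_square of_real_1 power_one)

lemma cis_int_div_power_eq_1:
  fixes M :: nat and l :: int
  assumes "M \<ge> 1"
  shows "cis (2 * pi * of_int l / M) ^ M = 1"
proof -
  have "cis (2 * pi * of_int l / M) ^ M = cis (real M * (2 * pi * of_int l / M))"
    by (rule Complex.DeMoivre)
  also have "real M * (2 * pi * of_int l / M) = 2 * pi * of_int l"
    using assms by simp
  finally show ?thesis by simp
qed

lemma sum_cis_power_int:
  fixes M :: nat and l :: int
  assumes "M \<ge> 1"
  shows "(\<Sum>i<M. cis (2 * pi * of_int l / M) ^ i) = (if int M dvd l then of_nat M else 0)"
proof (cases "int M dvd l")
  case True
  then obtain k where "l = int M * k" by auto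
  with assms have "cis (2 * pi * of_int l / M) = 1"
    by (auto simp: cis_eq_1_iff intro!: exI[of _ k])
  with True show ?thesis by simp
next
  case False
  let ?y = "cis (2 * pi * of_int l / M)"
  have "?y \<noteq> 1"
  proof
    assume "?y = 1"
    then obtain n where "2 * pi * of_int l / M = of_int n * (2 * pi)" by (auto simp: cis_eq_1_iff)
    with assms have "of_int l = of_int n * (real M)" by (simp add: field_simps)
    then have "l = n * int M" by (metis of_int_eq_iff of_int_mult of_int_of_nat_eq)
    with False show False by simp
  qed
  moreover have "?y ^ M = 1"
    by (rule cis_int_div_power_eq_1[OF assms])
  ultimately show ?thesis using False by (simp add: sum_gp_strict)
qed

lemma cis_power_mult_cnj_power:
  fixes M n m :: nat
  shows "cis (2*pi/M) ^ n * cnj (cis (2*pi/M)) ^ m = cis (2 * pi * of_int (int n - int m) / M)"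
  by (simp add: Complex.DeMoivre cis_cnj cis_mult flip: cis_power_int)
     (simp add: algebra_simps add_divide_distrib diff_divide_distrib)

lemma sum_root_unity_power_cnj:
  fixes M n m :: nat
  assumes "M \<ge> 1"
  shows "(\<Sum>i<M. (cis (2*pi/M) ^ n * cnj (cis (2*pi/M)) ^ m) ^ i)
           = (if n mod M = m mod M then of_nat M else 0)"
proof -
  have "n mod M = m mod M \<longleftrightarrow> int M dvd (int n - int m)"
    by (metis mod_eq_dvd_iff of_nat_mod of_nat_eq_iff)
  then show ?thesis
    unfolding cis_power_mult_cnj_power sum_cis_power_int[OF assms] by simp
qed

lemma sum_root_unity_power_cnj_atLeast1:
  fixes M n m :: nat
  assumes "M \<ge> 1"
  shows "(\<Sum>i\<in>{1..M}. (cis (2*pi/M) ^ n * cnj (cis (2*pi/M)) ^ m) ^ i)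
           = (if n mod M = m mod M then of_nat M else 0)"
proof -
  let ?y = "cis (2*pi/M) ^ n * cnj (cis (2*pi/M)) ^ m"
  have "?y ^ M = 1"
    unfolding cis_power_mult_cnj_power by (rule cis_int_div_power_eq_1[OF assms])
  then have "(\<Sum>i\<in>{1..M}. ?y ^ i) = (\<Sum>i<M. ?y ^ i)"
    using sum.lessThan_Suc_shift[of "\<lambda>i. ?y ^ i" M]
    by (simp add: sum.atLeast1_atMost_eq)
  then show ?thesis
    using sum_root_unity_power_cnj[OF assms] by simp
qed

section \<open>Interpolation of trigonometric polynomials\<close>

text \<open>A trigonometric polynomial of bidegree below d is determined by its values at the
  (2d-1)-st roots of unity; interp_kernel is the corresponding Dirichlet-type kernel.\<close>

definition trig_poly :: "nat \<Rightarrow> (nat \<Rightarrow> nat \<Rightarrow> complex) \<Rightarrow> complex \<Rightarrow> complex" where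
  "trig_poly d t z = (\<Sum>a<d. \<Sum>b<d. t a b * z ^ a * cnj z ^ b)"

definition interp_kernel :: "nat \<Rightarrow> complex \<Rightarrow> complex \<Rightarrow> complex" where
  "interp_kernel d z w = (cnj z * w) ^ (d - 1) * (\<Sum>k<2*d-1. (z * cnj w) ^ k)"

definition interp :: "nat \<Rightarrow> (nat \<Rightarrow> complex) \<Rightarrow> complex \<Rightarrow> complex" where
  "interp d f z = (\<Sum>i\<in>{1..2*d-1}. f i * interp_kernel d z (omega d ^ i)) / of_nat (2*d-1)"

lemma sum_swap_outer:
  "(\<Sum>i\<in>I. \<Sum>a\<in>A. \<Sum>b\<in>B. f a b i) = (\<Sum>a\<in>A. \<Sum>b\<in>B. \<Sum>i\<in>I. f a b i)"
  by (subst sum.swap) (simp add: sum.swap[of _ I])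

lemma mod_2d_minus_1_eq_iff:
  fixes a b k d :: nat
  assumes "d \<ge> 1" "a < d" "b < d" "k < 2*d-1"
  shows "(a+d-1) mod (2*d-1) = (b+k) mod (2*d-1) \<longleftrightarrow> k = a+d-1-b"
proof -
  have a: "(a+d-1) mod (2*d-1) = a+d-1" using assms by simp
  show ?thesis
  proof (cases "b + k < 2*d-1")
    case True
    then show ?thesis using a assms by auto
  next
    case False
    then have "(b+k) mod (2*d-1) = b+k-(2*d-1)" using assms by (simp add: le_mod_geq)
    then show ?thesis using a assms False by auto
  qed
qed

lemma interp_monomial:
  assumes "d \<ge> 1" "cmod z = 1" "a < d" "b < d"
  shows "interp d (\<lambda>i. (omega d^i)^a * cnj (omega d^i)^b) z = z^a * cnj z^b"
proof -
  let ?N = "2*d-1" and ?w = "omega d"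
  have N: "?N \<ge> 1" using assms by simp
  obtain D where D: "d = Suc D" using assms by (cases d) auto
  have expand: "(?w^i)^a * cnj (?w^i)^b * interp_kernel d z (?w^i)
      = (\<Sum>k<?N. cnj z^(d-1) * z^k * (?w^(a+d-1) * cnj ?w^(b+k))^i)" for i
    unfolding interp_kernel_def sum_distrib_left D
    by (rule sum.cong[OF refl])
       (simp add: power_mult_distrib power_add flip: power_mult, simp add: mult_ac)
  have "(\<Sum>i\<in>{1..?N}. (?w^i)^a * cnj (?w^i)^b * interp_kernel d z (?w^i))
     = (\<Sum>k<?N. cnj z^(d-1) * z^k * (\<Sum>i\<in>{1..?N}. (?w^(a+d-1) * cnj ?w^(b+k))^i))"
    unfolding expand by (subst sum.swap) (simp add: sum_distrib_left)
  also have "\<dots> = (\<Sum>k<?N. if k = a+d-1-b then cnj z^(d-1) * z^k * of_nat ?N else 0)"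
    by (intro sum.cong refl)
       (use mod_2d_minus_1_eq_iff[OF assms(1,3,4)] in
         \<open>simp only: omega_def sum_root_unity_power_cnj_atLeast1[OF N], auto\<close>)
  also have "\<dots> = cnj z^(d-1) * z^(a+d-1-b) * of_nat ?N"
    using assms by (subst sum.delta) auto
  also have "cnj z^(d-1) * z^(a+d-1-b) = (z * cnj z)^(d-1-b) * (z^a * cnj z^b)"
  proof -
    have "a+d-1-b = a + (d-1-b)" "d - 1 = (d-1-b) + b" using assms by auto
    then show ?thesis by (simp add: power_add power_mult_distrib mult_ac)
  qed
  also have "z * cnj z = 1"
    using assms(2) by (rule norm_eq_1_imp_mult_cnj)
  finally show ?thesis
    unfolding interp_def using N by (simp del: of_nat_diff add: nonzero_divide_eq_eq)
qed

lemma interp_trig_poly: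
  assumes "d \<ge> 1" "cmod z = 1"
  shows "interp d (\<lambda>i. trig_poly d t (omega d ^ i)) z = trig_poly d t z"
proof -
  let ?K = "\<lambda>i. interp_kernel d z (omega d ^ i)"
  have "interp d (\<lambda>i. trig_poly d t (omega d ^ i)) z =
     (\<Sum>i\<in>{1..2*d-1}. \<Sum>a<d. \<Sum>b<d. t a b * ((omega d^i)^a * cnj (omega d^i)^b * ?K i))
       / of_nat (2*d-1)"
    unfolding interp_def trig_poly_def sum_distrib_right
    by (intro arg_cong2[where f="(/)"] sum.cong refl) (simp add: mult_ac)
  also have "\<dots> = (\<Sum>a<d. \<Sum>b<d. t a b *
      ((\<Sum>i\<in>{1..2*d-1}. (omega d^i)^a * cnj (omega d^i)^b * ?K i) / of_nat (2*d-1)))"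
    by (subst sum_swap_outer) (simp add: sum_divide_distrib sum_distrib_left)
  also have "\<dots> = (\<Sum>a<d. \<Sum>b<d. t a b * (z^a * cnj z^b))"
    using interp_monomial[OF assms, unfolded interp_def] by simp
  finally show ?thesis unfolding trig_poly_def by (simp add: mult_ac)
qed

lemma norm_interp_kernel_le:
  assumes "cmod z = 1" "cmod w = 1"
  shows "cmod (interp_kernel d z w) \<le> real (2*d-1)"
proof -
  have "cmod (\<Sum>k<2*d-1. (z * cnj w)^k) \<le> (\<Sum>k<2*d-1. cmod ((z * cnj w)^k))"
    by (rule norm_sum)
  also have "\<dots> = 2*d-1" using assms by (simp add: norm_mult norm_power)
  finally show ?thesis unfolding interp_kernel_def using assms by (simp add: norm_mult norm_power)
qed

lemma norm_interp_le:
  assumes "d \<ge> 1" "cmod z = 1" "\<And>i. i \<in> {1..2*d-1} \<Longrightarrow> cmod (f i) \<le> \<epsilon>"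
  shows "cmod (interp d f z) \<le> real (2*d-1) * \<epsilon>"
proof -
  let ?N = "real (2*d-1)"
  have N: "?N > 0" using assms by simp
  have "1 \<in> {1..2*d-1}" using assms(1) by simp
  then have eps: "\<epsilon> \<ge> 0" using assms(3) order_trans[OF norm_ge_zero] by blast
  have "cmod (\<Sum>i\<in>{1..2*d-1}. f i * interp_kernel d z (omega d ^ i))
      \<le> (\<Sum>i\<in>{1..2*d-1}. cmod (f i * interp_kernel d z (omega d ^ i)))"
    by (rule norm_sum)
  also have "\<dots> \<le> (\<Sum>i\<in>{1..2*d-1}. \<epsilon> * ?N)"
  proof (rule sum_mono)
    fix i assume i: "i \<in> {1..2*d-1}"
    have "cmod (interp_kernel d z (omega d ^ i)) \<le> ?N"
      using assms(2) by (intro norm_interp_kernel_le) (auto simp: omega_def norm_power)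
    then show "cmod (f i * interp_kernel d z (omega d ^ i)) \<le> \<epsilon> * ?N"
      unfolding norm_mult using assms(3)[OF i] eps by (intro mult_mono) auto
  qed
  also have "\<dots> = ?N * (?N * \<epsilon>)" by simp
  finally show ?thesis
    using N unfolding interp_def norm_divide norm_of_nat by (simp add: divide_le_eq mult.commute)
qed

lemma interp_diff: "interp d (\<lambda>i. f i - g i) z = interp d f z - interp d g z"
  unfolding interp_def by (simp add: sum_subtractf ring_distribs diff_divide_distrib)

lemma sum_trig_poly_roots:
  assumes "d \<ge> 1"
  shows "(\<Sum>i\<in>{1..2*d-1}. trig_poly d t (omega d^i)) = of_nat (2*d-1) * (\<Sum>a<d. t a a)"
proof -
  have N: "2*d-1 \<ge> 1" using assms by simp
  have "(\<Sum>i\<in>{1..2*d-1}. trig_poly d t (omega d^i))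
      = (\<Sum>a<d. \<Sum>b<d. t a b * (\<Sum>i\<in>{1..2*d-1}. (omega d^a * cnj (omega d)^b)^i))"
    unfolding trig_poly_def
    by (subst sum_swap_outer, intro sum.cong refl) (simp add: sum_distrib_left mult.assoc power_mult_distrib
        flip: power_mult, simp add: mult.commute)
  also have "\<dots> = (\<Sum>a<d. \<Sum>b<d. t a b * (if a = b then of_nat (2*d-1) else 0))"
    by (intro sum.cong refl)
       (use assms in \<open>simp only: omega_def sum_root_unity_power_cnj_atLeast1[OF N], auto\<close>)
  also have "\<dots> = (\<Sum>a<d. t a a * of_nat (2*d-1))"
    by (intro sum.cong refl) (simp add: if_distrib cong: if_cong)
  finally show ?thesis by (simp add: sum_distrib_right mult_ac)
qed

lemma peval_mult_cnj_eq_trig_poly: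
  "peval d c z * cnj (peval d c (z * w)) = trig_poly d (\<lambda>a b. c a * cnj (c b) * cnj w ^ b) z"
  unfolding peval_def trig_poly_def cnj_sum sum_product
  by (intro sum.cong refl) (simp add: power_mult_distrib)

lemma of_real_norm_peval_sq: "of_real ((cmod (peval d c z))\<^sup>2) = trig_poly d (\<lambda>a b. c a * cnj (c b)) z"
  unfolding complex_norm_square using peval_mult_cnj_eq_trig_poly[of d c z 1] by simp

section \<open>The discrete Fourier transform on a rotated grid\<close>

lemma inverse_dft_peval:
  assumes "d \<ge> 1" "cmod z0 = 1" "a < d"
  shows "(\<Sum>k<d. peval d h (z0 * nu d^k) * cnj (z0 * nu d^k)^a) / of_nat d = h a"
proof -
  have "(\<Sum>k<d. peval d h (z0 * nu d^k) * cnj (z0 * nu d^k)^a)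
      = (\<Sum>b<d. h b * z0^b * cnj z0^a * (\<Sum>k<d. (nu d^b * cnj (nu d)^a)^k))"
    unfolding peval_def sum_distrib_right sum_distrib_left
    by (subst sum.swap, intro sum.cong refl)
       (simp add: power_mult_distrib mult_ac flip: power_mult)
  also have "\<dots> = (\<Sum>b<d. if b = a then h b * z0^b * cnj z0^a * of_nat d else 0)"
    by (intro sum.cong refl) (use assms in \<open>simp only: nu_def sum_root_unity_power_cnj, auto\<close>)
  also have "\<dots> = h a * (z0 * cnj z0)^a * of_nat d"
    using assms by (simp add: power_mult_distrib mult_ac)
  finally show ?thesis
    using assms by (simp add: norm_eq_1_imp_mult_cnj)
qed

lemma sum_dft_mult_cnj:
  assumes "d \<ge> 1" "cmod z0 = 1"
  shows "(\<Sum>a<d. (\<Sum>k<d. g k * cnj (z0 * nu d^k)^a) * cnj (\<Sum>k<d. g k * cnj (z0 * nu d^k)^a))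
     = of_nat d * (\<Sum>k<d. g k * cnj (g k))"
proof -
  have z0: "z0 * cnj z0 = 1" using assms(2) by (rule norm_eq_1_imp_mult_cnj)
  have grid: "cnj (z0 * nu d^k)^a * (z0 * nu d^l)^a = (nu d^l * cnj (nu d)^k)^a" for k l a
  proof -
    have "cnj (z0 * nu d^k) * (z0 * nu d^l) = (z0 * cnj z0) * (nu d^l * cnj (nu d)^k)"
      by (simp add: mult_ac)
    then show ?thesis by (simp only: power_mult_distrib[symmetric] z0 mult_1)
  qed
  have "(\<Sum>a<d. (\<Sum>k<d. g k * cnj (z0 * nu d^k)^a) * cnj (\<Sum>k<d. g k * cnj (z0 * nu d^k)^a))
     = (\<Sum>a<d. \<Sum>k<d. \<Sum>l<d. g k * cnj (g l) * (cnj (z0 * nu d^k)^a * (z0 * nu d^l)^a))"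
    unfolding cnj_sum sum_product by (intro sum.cong refl) (simp add: mult_ac)
  also have "\<dots> = (\<Sum>k<d. \<Sum>l<d. g k * cnj (g l) * (\<Sum>a<d. (nu d^l * cnj (nu d)^k)^a))"
    by (subst sum_swap_outer) (simp only: grid sum_distrib_left)
  also have "\<dots> = (\<Sum>k<d. \<Sum>l<d. if l = k then g k * cnj (g l) * of_nat d else 0)"
    by (intro sum.cong refl) (use assms in \<open>simp only: nu_def sum_root_unity_power_cnj, auto\<close>)
  also have "\<dots> = of_nat d * (\<Sum>k<d. g k * cnj (g k))"
    by (simp add: sum_distrib_left mult_ac)
  finally show ?thesis .
qed

lemma dft_parseval:
  assumes "d \<ge> 1" "cmod z0 = 1"
  shows "(\<Sum>a<d. (cmod ((\<Sum>k<d. g k * cnj (z0 * nu d^k)^a) / of_nat d))\<^sup>2)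
           = (\<Sum>k<d. (cmod (g k))\<^sup>2) / d"
proof -
  let ?S = "\<lambda>a. (\<Sum>k<d. g k * cnj (z0 * nu d^k)^a)"
  have "complex_of_real (\<Sum>a<d. (cmod (?S a / of_nat d))\<^sup>2)
      = (\<Sum>a<d. ?S a * cnj (?S a) / (of_nat d)^2)"
    by (simp only: of_real_sum complex_norm_square)
       (simp only: power2_eq_square complex_cnj_divide complex_cnj_of_nat times_divide_times_eq)
  also have "\<dots> = (\<Sum>a<d. ?S a * cnj (?S a)) / (of_nat d)^2"
    by (rule sum_divide_distrib[symmetric])
  also have "\<dots> = (\<Sum>k<d. g k * cnj (g k)) / of_nat d"
    unfolding sum_dft_mult_cnj[OF assms] using assms by (simp add: power2_eq_square)
  also have "\<dots> = complex_of_real ((\<Sum>k<d. (cmod (g k))\<^sup>2) / d)"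
    by (simp only: of_real_sum complex_norm_square of_real_divide of_real_of_nat_eq
        sum_divide_distrib)
  finally show ?thesis using of_real_eq_iff by blast
qed

section \<open>A polynomial is large on a grid coset avoiding its root directions\<close>

text \<open>For unit vectors at distance at least s, s^2 - s^4/4 bounds the squared sine of the angle
  between them from below.\<close>

lemma norm_diff_ray_ge:
  assumes "cmod w = 1" "cmod u = 1" "cmod (w - u) \<ge> s" "s \<ge> 0" "\<rho> \<ge> 0"
  shows "(cmod (w - of_real \<rho> * u))\<^sup>2 \<ge> (s\<^sup>2 - s^4/4) * (max 1 \<rho>)\<^sup>2"
proof -
  define c where "c = Re w * Re u + Im w * Im u"
  define c0 where "c0 = 1 - s\<^sup>2/2"
  have w: "(Re w)\<^sup>2 + (Im w)\<^sup>2 = 1" using assms(1) by (metis cmod_power2 one_power2)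
  have u: "(Re u)\<^sup>2 + (Im u)\<^sup>2 = 1" using assms(2) by (metis cmod_power2 one_power2)
  have "(cmod (w - u))\<^sup>2 = 2 - 2*c"
    unfolding cmod_power2 c_def using w u by (simp add: power2_eq_square algebra_simps)
  moreover have "s\<^sup>2 \<le> (cmod (w - u))\<^sup>2" using assms(3,4) by (simp add: power_mono)
  ultimately have c: "c \<le> c0" unfolding c0_def by simp
  have "(cmod (w - of_real \<rho> * u))\<^sup>2
      = ((Re w)\<^sup>2 + (Im w)\<^sup>2) + \<rho>\<^sup>2 * ((Re u)\<^sup>2 + (Im u)\<^sup>2) - 2*\<rho>*c"
    unfolding cmod_power2 c_def by (simp add: power2_eq_square algebra_simps)
  also have "\<dots> = 1 + \<rho>\<^sup>2 - 2*\<rho>*c" using w u by simp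
  finally have "(cmod (w - of_real \<rho> * u))\<^sup>2 = 1 + \<rho>\<^sup>2 - 2*\<rho>*c" .
  moreover have "1 + \<rho>\<^sup>2 - 2*\<rho>*c \<ge> 1 + \<rho>\<^sup>2 - 2*\<rho>*c0"
    using c assms(5) by (simp add: mult_left_mono)
  moreover have "1 + \<rho>\<^sup>2 - 2*\<rho>*c0 \<ge> (1 - c0\<^sup>2) * (max 1 \<rho>)\<^sup>2"
  proof (cases "\<rho> \<le> 1")
    case True
    then have "(1 - c0\<^sup>2) * (max 1 \<rho>)\<^sup>2 = 1 - c0\<^sup>2" by simp
    moreover have "1 + \<rho>\<^sup>2 - 2*\<rho>*c0 - (1 - c0\<^sup>2) = (\<rho> - c0)\<^sup>2"
      by (simp add: power2_eq_square algebra_simps)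
    ultimately show ?thesis by (metis diff_ge_0_iff_ge zero_le_power2)
  next
    case False
    then have "(1 - c0\<^sup>2) * (max 1 \<rho>)\<^sup>2 = (1 - c0\<^sup>2) * \<rho>\<^sup>2" by simp
    moreover have "1 + \<rho>\<^sup>2 - 2*\<rho>*c0 - (1 - c0\<^sup>2) * \<rho>\<^sup>2 = (1 - \<rho>*c0)\<^sup>2"
      by (simp add: power2_eq_square algebra_simps)
    ultimately show ?thesis by (metis diff_ge_0_iff_ge zero_le_power2)
  qed
  moreover have sine: "s\<^sup>2 - s^4/4 = 1 - c0\<^sup>2"
    unfolding c0_def by (simp add: power2_eq_square power4_eq_xxxx field_simps)
  ultimately show ?thesis unfolding sine by linarith
qed

lemma norm_diff_ge_if_direction_far:
  assumes "cmod w = 1" "z \<noteq> 0" "cmod (w - z / of_real (cmod z)) \<ge> s" "s \<ge> 0"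
  shows "cmod (w - z) \<ge> sqrt (s\<^sup>2 - s^4/4) * max 1 (cmod z)"
proof -
  let ?u = "z / of_real (cmod z)"
  have "cmod ?u = 1" using assms(2) by (simp add: norm_divide)
  moreover have "z = of_real (cmod z) * ?u" using assms(2) by simp
  ultimately have "(cmod (w - z))\<^sup>2 \<ge> (s\<^sup>2 - s^4/4) * (max 1 (cmod z))\<^sup>2"
    using norm_diff_ray_ge[OF assms(1) _ assms(3,4), of "cmod z"] by (metis norm_ge_zero)
  then have "sqrt ((s\<^sup>2 - s^4/4) * (max 1 (cmod z))\<^sup>2) \<le> cmod (w - z)"
    by (metis norm_ge_zero real_sqrt_abs real_sqrt_le_mono abs_of_nonneg)
  then show ?thesis by (simp add: real_sqrt_mult)
qed

lemma norm_cis_diff: "cmod (cis a - cis b) = 2 * \<bar>sin ((a - b)/2)\<bar>"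
proof -
  have "(cmod (cis a - cis b))\<^sup>2 = 2 - 2 * cos (a - b)"
    unfolding cmod_power2 by (simp add: power2_eq_square cos_diff algebra_simps)
  also have "\<dots> = (2 * \<bar>sin ((a - b)/2)\<bar>)\<^sup>2"
  proof -
    have h: "2 * ((a-b)/2) = a - b" by simp
    show ?thesis using cos_double_sin[of "(a-b)/2"] unfolding h by (simp add: power2_eq_square)
  qed
  finally show ?thesis by (rule power2_eq_imp_eq) auto
qed

lemma sin_pi_div_le_sin_pi_mult_div:
  fixes M l :: nat
  assumes "1 \<le> l" "l < M"
  shows "sin (pi / M) \<le> sin (pi * l / M)"
proof (cases "2 * l \<le> M")
  case True
  have "pi / M \<le> pi * l / M" using assms by (simp add: divide_right_mono)
  moreover have "pi * l / M \<le> pi / 2" using True assms by (simp add: field_simps)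
  moreover have "0 \<le> pi / M" by simp
  ultimately show ?thesis by (intro sin_monotone_2pi_le) (use pi_ge_zero in linarith)+
next
  case False
  have "pi * real (M - l) / M = pi - pi * l / M" using assms by (simp add: field_simps)
  then have "sin (pi * l / M) = sin (pi * (M - l) / M)" by (simp add: sin_diff)
  moreover have "pi / M \<le> pi * (M - l) / M" using assms by (simp add: divide_right_mono)
  moreover have "pi * (M - l) / M \<le> pi / 2" using False assms by (simp add: field_simps)
  moreover have "0 \<le> pi / M" by simp
  ultimately show ?thesis by (metis sin_monotone_2pi_le[of "pi / M"] neg_le_0_iff_le order.trans)
qed

lemma norm_cis_roots_unity_diff_ge:
  fixes M n n' :: nat
  assumes "n < M" "n' < M" "n \<noteq> n'"
  shows "cmod (cis (2*pi*n/M) - cis (2*pi*n'/M)) \<ge> 2 * sin (pi / M)"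
proof -
  have *: "cmod (cis (2*pi*a/M) - cis (2*pi*b/M)) \<ge> 2 * sin (pi / M)" if "b < a" "a < M" for a b :: nat
  proof -
    have "(2*pi*a/M - 2*pi*b/M)/2 = pi * real (a - b) / M" using that by (simp add: field_simps)
    then have "cmod (cis (2*pi*a/M) - cis (2*pi*b/M)) = 2 * \<bar>sin (pi * (a - b) / M)\<bar>"
      unfolding norm_cis_diff by simp
    moreover have "sin (pi / M) \<le> sin (pi * (a - b) / M)"
      using that by (intro sin_pi_div_le_sin_pi_mult_div) auto
    ultimately show ?thesis by linarith
  qed
  from assms show ?thesis
    using *[of n' n] *[of n n'] by (cases "n' < n") (auto simp: norm_minus_commute)
qed

definition grid :: "nat \<Rightarrow> nat \<Rightarrow> nat \<Rightarrow> complex" where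
  "grid d j k = cis (2*pi*real j/real (d*d)) * nu d ^ k"

lemma norm_grid [simp]: "cmod (grid d j k) = 1"
  by (simp add: grid_def nu_def norm_mult norm_power)

lemma grid_Suc: "grid d j (Suc k) = grid d j k * nu d"
  by (simp add: grid_def mult_ac)

lemma grid_eq_cis:
  assumes "d \<ge> 1"
  shows "grid d j k = cis (2*pi*real (d*k+j)/real (d*d))"
proof -
  have "nu d ^ k = cis (real k * (2*pi/real d))" unfolding nu_def by (rule Complex.DeMoivre)
  then have "grid d j k = cis (2*pi*real j/real (d*d) + real k * (2*pi/real d))"
    unfolding grid_def by (simp add: cis_mult)
  also have "2*pi*real j/real (d*d) + real k * (2*pi/real d) = 2*pi*real (d*k+j)/real (d*d)"
    using assms by (simp add: field_simps)
  finally show ?thesis .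
qed

text \<open>Pigeonhole: each point of Z is close to at most one coset, and there are fewer points
  than cosets.\<close>

lemma exists_grid_coset_far:
  fixes Z :: "complex set"
  assumes "d \<ge> 1" "finite Z" "card Z < d"
  shows "\<exists>j<d. \<forall>k<d. \<forall>u\<in>Z. cmod (grid d j k - u) \<ge> sin (pi / real (d*d))"
proof (rule ccontr)
  let ?s = "sin (pi / real (d*d))"
  assume "\<not> ?thesis"
  then have "\<forall>j<d. \<exists>u. u \<in> Z \<and> (\<exists>k<d. cmod (grid d j k - u) < ?s)" by (simp add: not_le) blast
  then obtain f where f: "\<And>j. j < d \<Longrightarrow> f j \<in> Z \<and> (\<exists>k<d. cmod (grid d j k - f j) < ?s)" by metis
  have "inj_on f {..<d}"
  proof (rule inj_onI, rule ccontr)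
    fix j j' assume j: "j \<in> {..<d}" and j': "j' \<in> {..<d}" and eq: "f j = f j'" and ne: "j \<noteq> j'"
    obtain k where k: "k < d" "cmod (grid d j k - f j) < ?s" using f j by auto
    obtain k' where k': "k' < d" "cmod (grid d j' k' - f j') < ?s" using f j' by auto
    have lt: "d*a+b < d*d" if "a < d" "b < d" for a b :: nat
    proof -
      have "d*a+b < d*Suc a" using that by simp
      also have "d*Suc a \<le> d*d" using that by (intro mult_le_mono2) simp
      finally show ?thesis .
    qed
    have "d*k+j \<noteq> d*k'+j'"
    proof
      assume "d*k+j = d*k'+j'"
      then have "(d*k+j) mod d = (d*k'+j') mod d" by simp
      then show False using j j' ne by simp
    qed
    then have "2 * ?s \<le> cmod (grid d j k - grid d j' k')"
      using norm_cis_roots_unity_diff_ge[of "d*k+j" "d*d" "d*k'+j'"] lt j j' k(1) k'(1)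
      by (simp add: grid_eq_cis[OF assms(1)])
    also have "\<dots> \<le> cmod (grid d j k - f j) + cmod (f j' - grid d j' k')"
      using eq norm_triangle_ineq[of "grid d j k - f j" "f j - grid d j' k'"] by simp
    also have "\<dots> < 2 * ?s" using k k' by (simp add: norm_minus_commute)
    finally show False by simp
  qed
  moreover have "f ` {..<d} \<subseteq> Z" using f by auto
  ultimately have "card {..<d} \<le> card Z" using card_inj_on_le assms(2) by blast
  then show False using assms(3) by simp
qed

text \<open>Each root z contributes a factor w - z, which is comparable to 1 + |z| both at w and,
  by the triangle inequality from above, at any other point w' of the unit circle.\<close>

lemma norm_poly_ge_if_far_from_roots:
  fixes P :: "complex poly"
  assumes "P \<noteq> 0" "cmod w = 1" "0 \<le> \<tau>" "\<tau> \<le> 1/2"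
    "\<And>z. poly P z = 0 \<Longrightarrow> z \<noteq> 0 \<Longrightarrow> cmod (w - z) \<ge> 2*\<tau>*max 1 (cmod z)"
    "cmod w' = 1"
  shows "cmod (poly P w) \<ge> \<tau>^(degree P) * cmod (poly P w')"
  using assms
proof (induction "degree P" arbitrary: P)
  case 0
  then obtain c where "P = [:c:]" by (metis degree_eq_zeroE)
  then show ?case by simp
next
  case (Suc n)
  have "\<not> constant (poly P)" using Suc(2) constant_degree by (metis nat.distinct(1))
  then obtain z where "poly P z = 0" using fundamental_theorem_of_algebra by blast
  then obtain Q where Q: "P = [:-z, 1:] * Q" using poly_eq_0_iff_dvd by (metis dvdE)
  have "Q \<noteq> 0" using Suc(3) Q by auto
  have P: "poly P x = (x - z) * poly Q x" for x
    unfolding Q by (simp add: algebra_simps)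
  have "degree P = Suc (degree Q)"
    using Q degree_mult_eq[of "[:-z, 1:]" Q] \<open>Q \<noteq> 0\<close> by simp
  have IH: "cmod (poly Q w) \<ge> \<tau>^(degree Q) * cmod (poly Q w')"
    using Suc \<open>degree P = Suc (degree Q)\<close> \<open>Q \<noteq> 0\<close> by (intro Suc(1)) (auto simp: P)
  have lower: "cmod (w - z) \<ge> \<tau> * (1 + cmod z)"
  proof (cases "z = 0")
    case True then show ?thesis using Suc(4,5,6) by simp
  next
    case False
    then have "cmod (w - z) \<ge> 2*\<tau>*max 1 (cmod z)" using Suc(7) \<open>poly P z = 0\<close> by auto
    moreover have "\<tau> * (1 + cmod z) \<le> 2*\<tau>*max 1 (cmod z)"
    proof -
      have "1 + cmod z \<le> 2*max 1 (cmod z)" by (simp add: max_def)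
      from mult_left_mono[OF this Suc(5)] show ?thesis by (simp add: mult_ac)
    qed
    ultimately show ?thesis by linarith
  qed
  have upper: "cmod (w' - z) \<le> 1 + cmod z" using norm_triangle_ineq4[of w' z] Suc(8) by simp
  have "\<tau>^(degree P) * cmod (poly P w') = \<tau> * \<tau>^(degree Q) * (cmod (w' - z) * cmod (poly Q w'))"
    using \<open>degree P = Suc (degree Q)\<close> by (simp add: P norm_mult)
  also have "\<dots> \<le> \<tau> * \<tau>^(degree Q) * ((1 + cmod z) * cmod (poly Q w'))"
    using upper Suc(5) by (intro mult_left_mono mult_right_mono) auto
  also have "\<dots> = (\<tau> * (1 + cmod z)) * (\<tau>^(degree Q) * cmod (poly Q w'))"
    by (simp add: mult_ac)
  also have "\<dots> \<le> cmod (w - z) * cmod (poly Q w)"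
    using lower IH Suc(5) by (intro mult_mono) auto
  also have "\<dots> = cmod (poly P w)" by (simp add: P norm_mult)
  finally show ?case .
qed

lemma pnorm2_eq_1_iff: "pnorm2 d c = 1 \<longleftrightarrow> (\<Sum>a<d. (cmod (c a))\<^sup>2) = 1"
  unfolding pnorm2_def by simp

lemma sum_norm_peval_roots_sq:
  assumes "d \<ge> 1"
  shows "(\<Sum>i\<in>{1..2*d-1}. (cmod (peval d c (omega d^i)))\<^sup>2) = real (2*d-1) * (\<Sum>a<d. (cmod (c a))\<^sup>2)"
proof -
  have "complex_of_real (\<Sum>i\<in>{1..2*d-1}. (cmod (peval d c (omega d^i)))\<^sup>2)
      = (\<Sum>i\<in>{1..2*d-1}. trig_poly d (\<lambda>a b. c a * cnj (c b)) (omega d^i))"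
    by (simp only: of_real_sum of_real_norm_peval_sq)
  also have "\<dots> = of_nat (2*d-1) * (\<Sum>a<d. c a * cnj (c a))"
    by (rule sum_trig_poly_roots[OF assms])
  also have "\<dots> = complex_of_real (real (2*d-1) * (\<Sum>a<d. (cmod (c a))\<^sup>2))"
    by (simp only: of_real_mult of_real_sum complex_norm_square of_real_of_nat_eq)
  finally show ?thesis using of_real_eq_iff by blast
qed

lemma exists_unit_norm_peval_ge_1:
  assumes "d \<ge> 1" "pnorm2 d c = 1"
  shows "\<exists>w. cmod w = 1 \<and> cmod (peval d c w) \<ge> 1"
proof (rule ccontr)
  assume "\<not> ?thesis"
  then have "cmod (peval d c (omega d^i)) < 1" for i by (auto simp: omega_def norm_power not_le)
  then have "(\<Sum>i\<in>{1..2*d-1}. (cmod (peval d c (omega d^i)))\<^sup>2) < (\<Sum>i\<in>{1..2*d-1}. 1)"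
    using assms(1) by (intro sum_strict_mono) (auto simp: power_less_one_iff abs_square_less_1)
  then show False
    using assms unfolding sum_norm_peval_roots_sq[OF assms(1)] pnorm2_eq_1_iff by simp
qed

lemma norm_peval_le_sqrt:
  assumes "cmod z = 1" "pnorm2 d c = 1"
  shows "cmod (peval d c z) \<le> sqrt (real d)"
proof -
  have "cmod (peval d c z) \<le> (\<Sum>a<d. cmod (c a * z^a))" unfolding peval_def by (rule norm_sum)
  also have "\<dots> = (\<Sum>a<d. cmod (c a))" using assms(1) by (simp add: norm_mult norm_power)
  also have "\<dots> \<le> sqrt (real d)"
  proof (rule real_le_rsqrt)
    have "(\<Sum>a<d. cmod (c a))\<^sup>2 \<le> (\<Sum>a<d. (cmod (c a))\<^sup>2) * card {..<d}"
      by (rule sum_squared_le_sum_of_squares)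
    then show "(\<Sum>a<d. cmod (c a))\<^sup>2 \<le> real d" using assms(2) by (simp add: pnorm2_eq_1_iff)
  qed
  finally show ?thesis .
qed

lemma exists_poly_peval:
  assumes "pnorm2 d c = 1"
  obtains P :: "complex poly" where "P \<noteq> 0" "degree P \<le> d - 1" "\<And>z. poly P z = peval d c z"
proof
  define P where "P = (\<Sum>a<d. monom (c a) a)"
  show "poly P z = peval d c z" for z unfolding P_def peval_def by (simp add: poly_sum poly_monom)
  show "degree P \<le> d - 1" unfolding P_def
    by (rule degree_sum_le) (auto intro: order_trans[OF degree_monom_le])
  have "\<exists>a<d. c a \<noteq> 0"
  proof (rule ccontr)
    assume "\<not> ?thesis"
    then have "(\<Sum>a<d. (cmod (c a))\<^sup>2) = 0" by simp
    then show False using assms by (simp add: pnorm2_eq_1_iff)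
  qed
  then obtain a where "a < d" "c a \<noteq> 0" by blast
  moreover have "coeff P a = c a" unfolding P_def using \<open>a < d\<close> by (simp add: coeff_sum)
  ultimately show "P \<noteq> 0" by auto
qed

lemma half_sqrt_chord_sine_bounds:
  fixes s :: real
  assumes "0 \<le> s" "s \<le> 1"
  shows "0 \<le> sqrt (s\<^sup>2 - s^4/4) / 2" "sqrt (s\<^sup>2 - s^4/4) / 2 \<le> 1/2"
proof -
  have "s^4 \<le> s\<^sup>2" using assms by (intro power_decreasing) auto
  then have "0 \<le> s\<^sup>2 - s^4/4" using zero_le_power2[of s] by linarith
  then show "0 \<le> sqrt (s\<^sup>2 - s^4/4) / 2" by simp
  have "s\<^sup>2 \<le> 1" using assms by (simp add: power_le_one)
  then have "s\<^sup>2 - s^4/4 \<le> 1" using zero_le_power[OF assms(1), of 4] by linarith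
  then show "sqrt (s\<^sup>2 - s^4/4) / 2 \<le> 1/2" by simp
qed

text \<open>Some coset of the grid stays angularly away from all (fewer than d) roots of p, and
  there p is bounded below relative to its maximum on the circle, which is at least 1.\<close>

lemma exists_grid_coset_peval_ge:
  assumes "d \<ge> 2" "pnorm2 d c = 1"
  defines "s \<equiv> sin (pi / real (d*d))"
  defines "\<tau> \<equiv> sqrt (s\<^sup>2 - s^4/4) / 2"
  shows "\<exists>j<d. \<forall>k<d. cmod (peval d c (grid d j k)) \<ge> \<tau>^(d-1)"
proof -
  obtain P where P0: "P \<noteq> 0" and degP: "degree P \<le> d - 1" and P: "\<And>z. poly P z = peval d c z"
    using exists_poly_peval[OF assms(2)] by blast
  let ?R = "{z. poly P z = 0}"
  define Z where "Z = (\<lambda>z. z / of_real (cmod z)) ` (?R - {0})"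
  have finR: "finite ?R" by (rule poly_roots_finite[OF P0])
  then have "finite Z" unfolding Z_def by simp
  have "card Z \<le> card (?R - {0})" unfolding Z_def using finR by (intro card_image_le) simp
  also have "\<dots> \<le> card ?R" using finR by (intro card_mono) auto
  also have "\<dots> \<le> d - 1" using card_poly_roots_bound[OF P0] degP by linarith
  finally have "card Z < d" using assms(1) by linarith
  then obtain j where "j < d" and far: "\<forall>k<d. \<forall>u\<in>Z. cmod (grid d j k - u) \<ge> s"
    using exists_grid_coset_far[of d Z] \<open>finite Z\<close> assms(1) unfolding s_def by auto
  have "real (d*d) \<ge> 1" using mult_mono[of 1 "real d" 1 "real d"] assms(1) by simp
  then have "pi / real (d*d) \<le> pi" by (simp add: divide_le_eq)
  then have s0: "0 \<le> s" unfolding s_def by (intro sin_ge_zero) auto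
  have "s \<le> 1" unfolding s_def by simp
  then have \<tau>0: "0 \<le> \<tau>" and \<tau>1: "\<tau> \<le> 1/2"
    unfolding \<tau>_def using half_sqrt_chord_sine_bounds s0 by auto
  obtain w' where w': "cmod w' = 1" "cmod (peval d c w') \<ge> 1"
    using exists_unit_norm_peval_ge_1[OF _ assms(2)] assms(1) by auto
  show ?thesis
  proof (intro exI[of _ j] conjI \<open>j < d\<close> allI impI)
    fix k assume "k < d"
    have "cmod (grid d j k - z) \<ge> 2*\<tau>*max 1 (cmod z)" if "poly P z = 0" "z \<noteq> 0" for z
    proof -
      have "z / of_real (cmod z) \<in> Z" unfolding Z_def using that by auto
      then have "cmod (grid d j k - z / of_real (cmod z)) \<ge> s" using far \<open>k < d\<close> by blast
      from norm_diff_ge_if_direction_far[OF norm_grid that(2) this s0] show ?thesis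
        unfolding \<tau>_def by simp
    qed
    then have "cmod (poly P (grid d j k)) \<ge> \<tau>^(degree P) * cmod (poly P w')"
      by (intro norm_poly_ge_if_far_from_roots[OF P0 norm_grid \<tau>0 \<tau>1 _ w'(1)])
    moreover have "\<tau>^(degree P) * cmod (poly P w') \<ge> \<tau>^(degree P)"
      using w'(2) \<tau>0 P by (simp add: mult_le_cancel_left1)
    moreover have "\<tau>^(degree P) \<ge> \<tau>^(d-1)" using degP \<tau>0 \<tau>1 by (intro power_decreasing) auto
    ultimately show "cmod (peval d c (grid d j k)) \<ge> \<tau>^(d-1)" unfolding P by linarith
  qed
qed

section \<open>Estimates for the constants\<close>

lemma rconst_bounds:
  assumes "d \<ge> 2"
  shows "0 < rconst d" "rconst d \<le> 1"
proof -
  define D where "D = real (d-1) * (real d)^2"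
  have "1 * 2^2 \<le> D" unfolding D_def using assms by (intro mult_mono power_mono) auto
  then have "0 < 2 * pi / D" "2 * pi / D < pi"
    using pi_gt_zero by (auto simp: field_simps)
  then show "0 < rconst d" unfolding rconst_def D_def[symmetric] by (intro sin_gt_zero) auto
  show "rconst d \<le> 1" unfolding rconst_def by simp
qed

lemma betaconst_eq:
  assumes "d \<ge> 2"
  shows "betaconst d = rconst d ^ ((d-1)*d div 2) * (((real d - 1)/(2*real d))^(d-1) / real d)
            / (\<Prod>k\<in>{1..d-1}. rconst d ^ k + 1)"
proof -
  let ?r = "rconst d"
  have "even ((d - 1) * d)" by (cases d) auto
  then obtain m where m: "(d-1)*d = 2*m" by (rule evenE)
  then have "real ((d - 1) * d) / 2 = real ((d-1)*d div 2)" by simp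
  then have pow: "?r powr (real ((d - 1) * d) / 2) = ?r ^ ((d-1)*d div 2)"
    using rconst_bounds[OF assms] by (simp add: powr_realpow)
  have "((real d - 1) / (2 * real d)) ^ d = ((real d - 1) / (2 * real d)) ^ (d-1) * ((real d - 1) / (2 * real d))"
    using assms by (metis Suc_diff_1 less_le_trans pos2 power_Suc2)
  then have "((real d - 1) / (2 * real d)) ^ d * (2 / (real d - 1)) = ((real d - 1)/(2*real d))^(d-1) / real d"
    using assms by (simp add: field_simps)
  then show ?thesis unfolding betaconst_def Let_def pow by (simp only: mult.assoc)
qed

lemma betaconst_bounds:
  assumes "d \<ge> 2"
  shows "betaconst d \<le> rconst d ^ ((d-1)*d div 2) * ((1/2)^(d-1) / real d)"
    and "0 < betaconst d"
proof -
  let ?r = "rconst d" and ?q = "(real d - 1)/(2*real d)"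
  have r: "0 < ?r" using rconst_bounds[OF assms] by simp
  have P: "(\<Prod>k\<in>{1..d-1}. ?r ^ k + 1) \<ge> 1" using r by (intro prod_ge_1) auto
  have q: "0 < ?q" "?q \<le> 1/2" using assms by (auto simp: field_simps)
  have "0 \<le> ?r ^ ((d-1)*d div 2) * (?q^(d-1) / real d)" using r q by simp
  from divide_left_mono[OF P this] P
  have "betaconst d \<le> ?r ^ ((d-1)*d div 2) * (?q^(d-1) / real d)"
    unfolding betaconst_eq[OF assms] by simp
  also have "\<dots> \<le> ?r ^ ((d-1)*d div 2) * ((1/2)^(d-1) / real d)"
    using r q by (intro mult_left_mono divide_right_mono power_mono) auto
  finally show "betaconst d \<le> ?r ^ ((d-1)*d div 2) * ((1/2)^(d-1) / real d)" .
  show "0 < betaconst d"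
    unfolding betaconst_eq[OF assms] using r q P assms by (intro divide_pos_pos mult_pos_pos) auto
qed

lemma betaconst_2: "betaconst 2 = 1/16"
proof -
  have "rconst 2 = 1" unfolding rconst_def by simp
  then show ?thesis unfolding betaconst_eq[of 2, simplified] by simp
qed

lemma betaconst_le_inverse_4d:
  assumes "d \<ge> 3"
  shows "betaconst d \<le> 1 / (4 * real d)"
proof -
  have r: "0 < rconst d" "rconst d \<le> 1" using rconst_bounds assms by auto
  have "betaconst d \<le> rconst d ^ ((d-1)*d div 2) * ((1/2)^(d-1) / real d)"
    using betaconst_bounds assms by simp
  also have "\<dots> \<le> 1 * ((1/2)^(d-1) / real d)" using r by (intro mult_right_mono power_le_one) auto
  also have "\<dots> = (1/2)^(d-1) / real d" by simp
  also have "\<dots> \<le> (1/2)^2 / real d" using assms by (intro divide_right_mono power_decreasing) auto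
  finally show ?thesis by (simp add: power2_eq_square)
qed

lemma betaconst_le_1_12:
  assumes "d \<ge> 2"
  shows "betaconst d \<le> 1/12"
proof (cases "d = 2")
  case False
  then have "betaconst d \<le> 1 / (4 * real d)" using betaconst_le_inverse_4d assms by simp
  also have "\<dots> \<le> 1 / (4 * 3)" using False assms by (intro divide_left_mono) auto
  finally show ?thesis by simp
qed (simp add: betaconst_2)

lemma sin_ge_cubic:
  fixes x :: real
  assumes "0 \<le> x"
  shows "x - x^3/6 \<le> sin x"
proof -
  have "\<bar>sin x - (\<Sum>m<3. sin_coeff m * x ^ m)\<bar> \<le> inverse (fact 3) * \<bar>x\<bar> ^ 3"
    by (rule Maclaurin_sin_bound)
  moreover have "(\<Sum>m<3. sin_coeff m * x ^ m) = x" by (simp add: sin_coeff_def eval_nat_numeral)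
  moreover have "inverse (fact 3) * \<bar>x\<bar> ^ 3 = x^3/6"
    using assms by (simp add: eval_nat_numeral fact_numeral)
  ultimately show ?thesis by linarith
qed

text \<open>Both sides are compared through x = pi/(d*d): rconst d \<le> x since (d-1)*d*d \<ge> 2*d*d,
  while sin x \<ge> 5/6 x since x \<le> 4/9.\<close>

lemma rconst_pow_le_sin_sq:
  assumes "d \<ge> 3"
  defines "s \<equiv> sin (pi / real (d*d))"
  shows "rconst d ^ d \<le> s\<^sup>2 - s^4/4"
proof -
  define x where "x = pi / real (d*d)"
  have r: "0 < rconst d" "rconst d \<le> 1" using rconst_bounds assms by auto
  have dd: "real (d*d) \<ge> 9" using mult_mono[of 3 "real d" 3 "real d"] assms by simp
  then have x0: "0 < x" unfolding x_def by simp
  have "x \<le> pi / 9" unfolding x_def using dd by (intro divide_left_mono) auto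
  then have x49: "x \<le> 4/9" using pi_less_4 by linarith
  have rx: "rconst d \<le> x"
  proof -
    define Q where "Q = real (d - 1) * (real d)^2"
    have "2 * (real d)^2 \<le> Q" unfolding Q_def using assms by (intro mult_right_mono) auto
    then have Q: "Q \<ge> 2 * real (d*d)" by (simp add: power2_eq_square)
    have "rconst d \<le> 2 * pi / Q" unfolding rconst_def Q_def[symmetric]
      by (rule sin_x_le_x) (use Q dd in auto)
    also have "\<dots> \<le> 2 * pi / (2 * real (d*d))" using Q dd by (intro divide_left_mono) auto
    finally show ?thesis unfolding x_def by simp
  qed
  have sx: "5/6 * x \<le> s"
  proof -
    have "x^3 \<le> x" using x0 x49 by (simp add: power3_eq_cube mult_le_one)
    then show ?thesis using sin_ge_cubic[of x] x0 unfolding s_def x_def[symmetric] by linarith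
  qed
  have "s \<le> 1" unfolding s_def by simp
  then have s4: "s^4 \<le> s\<^sup>2" using sx x0 by (intro power_decreasing) auto
  have "rconst d ^ d \<le> rconst d ^ 3" using r assms by (intro power_decreasing) auto
  also have "\<dots> \<le> x ^ 3" using r rx by (intro power_mono) auto
  also have "\<dots> = x * x\<^sup>2" by (simp add: power3_eq_cube power2_eq_square)
  also have "\<dots> \<le> (25/48) * x\<^sup>2" using x49 by (intro mult_right_mono) auto
  also have "\<dots> = (3/4) * (5/6 * x)\<^sup>2" by (simp add: power2_eq_square)
  also have "\<dots> \<le> (3/4) * s\<^sup>2" using sx x0 by (intro mult_left_mono power_mono) auto
  also have "\<dots> \<le> s\<^sup>2 - s^4/4" using s4 by linarith
  finally show ?thesis .
qed

lemma betaconst_le_grid_bound: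
  assumes "d \<ge> 2"
  defines "s \<equiv> sin (pi / real (d*d))"
  defines "\<tau> \<equiv> sqrt (s\<^sup>2 - s^4/4) / 2"
  shows "betaconst d \<le> \<tau>^(d-1)"
proof (cases "d = 2")
  case True
  have s: "s = sqrt 2 / 2" unfolding s_def True using sin_45 by simp
  have s2: "s\<^sup>2 = 1/2" unfolding s by (simp add: power_divide)
  have "s^4 = (s\<^sup>2)\<^sup>2" by (simp flip: power_mult)
  then have s4: "s^4 = 1/4" using s2 by (simp add: power_divide)
  have "\<tau> = sqrt (7/16) / 2" unfolding \<tau>_def s2 s4 by simp
  moreover have "sqrt (1/64) \<le> sqrt (7/16::real)" by (rule real_sqrt_le_mono) simp
  moreover have "sqrt (1/64::real) = 1/8" by (simp add: real_sqrt_divide)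
  ultimately show ?thesis using True betaconst_2 by simp
next
  case False
  then have d3: "d \<ge> 3" using assms by simp
  let ?r = "rconst d" and ?E = "(d-1)*d div 2"
  have r: "0 < ?r" "?r \<le> 1" using rconst_bounds[OF assms(1)] by auto
  have key: "?r ^ d \<le> s\<^sup>2 - s^4/4"
    unfolding s_def by (rule rconst_pow_le_sin_sq[OF d3])
  have nonneg: "0 \<le> s\<^sup>2 - s^4/4" using key r by (meson order_trans zero_le_power less_imp_le)
  then have \<tau>2: "\<tau>\<^sup>2 = (s\<^sup>2 - s^4/4) / 4" and \<tau>0: "0 \<le> \<tau>"
    unfolding \<tau>_def by (simp_all add: power_divide)
  have "betaconst d \<le> ?r ^ ?E * ((1/2)^(d-1) / real d)" using betaconst_bounds assms by simp
  also have "\<dots> \<le> ?r ^ ?E * ((1/2)^(d-1) / 1)"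
    using r assms by (intro mult_left_mono divide_left_mono) auto
  finally have b: "betaconst d \<le> ?r ^ ?E * (1/2)^(d-1)" by simp
  have "2 * ?E = d * (d-1)" by (cases d) auto
  then have "(?r ^ ?E)\<^sup>2 = (?r ^ d) ^ (d-1)"
    by (metis power_mult mult.commute)
  moreover have "((1/2::real)^(d-1))\<^sup>2 = (1/4)^(d-1)"
    by (simp add: power_mult[symmetric] mult.commute) (simp add: power_mult power2_eq_square)
  ultimately have "(?r ^ ?E * (1/2)^(d-1))\<^sup>2 = (?r ^ d / 4) ^ (d-1)"
    by (simp only: power_mult_distrib) (simp add: power_divide)
  also have "\<dots> \<le> ((s\<^sup>2 - s^4/4) / 4) ^ (d-1)" using key r by (intro power_mono divide_right_mono) auto
  also have "\<dots> = (\<tau>^(d-1))\<^sup>2" unfolding \<tau>2[symmetric] by (simp add: power_mult[symmetric] mult.commute)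
  finally have "?r ^ ?E * (1/2)^(d-1) \<le> \<tau>^(d-1)"
    by (rule power2_le_imp_le[OF _ zero_le_power[OF \<tau>0]])
  then show ?thesis using b by linarith
qed

section \<open>Propagating the phase along a coset\<close>

definition phase :: "complex \<Rightarrow> complex" where
  "phase w = (if w = 0 then 1 else w / of_real (cmod w))"

lemma norm_phase [simp]: "cmod (phase w) = 1"
  unfolding phase_def by (auto simp: norm_divide)

lemma norm_scaled_phase_diff_le: "cmod (of_real (cmod a) * phase w - a) \<le> 2 * cmod (w - a)"
proof (cases "w = 0")
  case True
  then show ?thesis using norm_triangle_ineq4[of "of_real (cmod a)" a] by (simp add: phase_def)
next
  case False
  have "of_real (cmod a) * phase w - w = of_real (cmod a - cmod w) * phase w"
    using False by (simp add: phase_def algebra_simps)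
  then have "cmod (of_real (cmod a) * phase w - w) = \<bar>cmod a - cmod w\<bar>"
    by (simp only: norm_mult norm_phase norm_of_real mult_1_right)
  also have "\<dots> \<le> cmod (w - a)" by (metis norm_minus_commute norm_triangle_ineq3)
  finally show ?thesis
    using norm_triangle_ineq[of "of_real (cmod a) * phase w - w" "w - a"] by simp
qed

lemma abs_sqrt_diff_le:
  assumes "g \<ge> b\<^sup>2" "b > 0" "\<bar>g - x\<^sup>2\<bar> \<le> E" "x \<ge> 0"
  shows "\<bar>sqrt g - x\<bar> \<le> E / b"
proof -
  have sg: "sqrt g \<ge> b" using assms(1) by (intro real_le_rsqrt)
  then have pos: "sqrt g + x > 0" using assms(2,4) by linarith
  have "g \<ge> 0" using assms(1) by (meson order_trans zero_le_power2)
  then have "(sqrt g - x) * (sqrt g + x) = g - x\<^sup>2"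
    by (simp add: power2_eq_square algebra_simps)
  then have "\<bar>sqrt g - x\<bar> * (sqrt g + x) = \<bar>g - x\<^sup>2\<bar>"
    using pos by (metis abs_mult abs_of_pos)
  then have "\<bar>sqrt g - x\<bar> = \<bar>g - x\<^sup>2\<bar> / (sqrt g + x)"
    using pos by (simp add: field_simps)
  also have "\<dots> \<le> E / (sqrt g + x)" using assms(3) pos by (intro divide_right_mono) auto
  also have "\<dots> \<le> E / b"
    using assms(2-4) sg pos by (intro divide_left_mono) auto
  finally show ?thesis .
qed

text \<open>One step of the propagation: from v \<approx> c0 u and F \<approx> u * cnj a, the modulus sqrt g of a
  together with the phase of cnj F / cnj v recovers c0 * a.\<close>

lemma phase_step_error:
  assumes c0: "cmod c0 = 1" and g: "g \<ge> b\<^sup>2" and b: "b > 0" and gE: "\<bar>g - (cmod a)\<^sup>2\<bar> \<le> E1"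
    and v: "cmod v \<ge> b" and F: "cmod (F - u * cnj a) \<le> E2" and U: "cmod a \<le> U"
  shows "cmod (of_real (sqrt g) * phase (cnj F / cnj v) - c0 * a)
           \<le> E1/b + 2*((E2 + U * cmod (v - c0*u))/b)"
proof -
  let ?w = "cnj F / cnj v" and ?a = "c0 * a"
  have v0: "v \<noteq> 0" using v b by auto
  have na: "cmod ?a = cmod a" using c0 by (simp add: norm_mult)
  have "(?w - ?a) * cnj v = cnj (F - u * cnj a) + ?a * (cnj (c0 * u) - cnj v)"
  proof -
    have "(?w - ?a) * cnj v = cnj F - ?a * cnj v" using v0 by (simp add: field_simps)
    moreover have "?a * cnj (c0 * u) = (c0 * cnj c0) * (a * cnj u)" by (simp add: mult_ac)
    ultimately show ?thesis using norm_eq_1_imp_mult_cnj[OF c0] by (simp add: algebra_simps)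
  qed
  then have "cmod (?w - ?a) * cmod v = cmod (cnj (F - u * cnj a) + ?a * (cnj (c0 * u) - cnj v))"
    by (metis norm_mult complex_mod_cnj)
  also have "\<dots> \<le> cmod (F - u * cnj a) + cmod a * cmod (v - c0 * u)"
    using norm_triangle_ineq[of "cnj (F - u * cnj a)" "?a * (cnj (c0 * u) - cnj v)"]
    by (metis na norm_mult complex_cnj_diff complex_mod_cnj norm_minus_commute)
  also have "\<dots> \<le> E2 + U * cmod (v - c0 * u)"
    using F U by (intro add_mono mult_right_mono) auto
  finally have wv: "cmod (?w - ?a) * cmod v \<le> E2 + U * cmod (v - c0 * u)" .
  have "cmod (?w - ?a) * b \<le> cmod (?w - ?a) * cmod v" using v by (intro mult_left_mono) auto
  with wv have wa: "cmod (?w - ?a) \<le> (E2 + U * cmod (v - c0 * u)) / b"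
    using b by (simp add: le_divide_eq)
  have sq: "\<bar>sqrt g - cmod ?a\<bar> \<le> E1 / b" unfolding na by (rule abs_sqrt_diff_le[OF g b gE]) simp
  have "of_real (sqrt g) * phase ?w - ?a
      = of_real (sqrt g - cmod ?a) * phase ?w + (of_real (cmod ?a) * phase ?w - ?a)"
    by (simp add: algebra_simps)
  moreover have "cmod (of_real (sqrt g - cmod ?a) * phase ?w) = \<bar>sqrt g - cmod ?a\<bar>"
    by (simp only: norm_mult norm_phase norm_of_real mult_1_right)
  ultimately have "cmod (of_real (sqrt g) * phase ?w - ?a)
      \<le> \<bar>sqrt g - cmod ?a\<bar> + cmod (of_real (cmod ?a) * phase ?w - ?a)"
    by (metis norm_triangle_ineq)
  also have "\<dots> \<le> E1 / b + 2 * cmod (?w - ?a)" using sq norm_scaled_phase_diff_le[of ?a ?w] by linarith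
  finally show ?thesis using wa by linarith
qed

text \<open>The unknown global phase c0 is fixed at the start point, where v 0 is real and positive.\<close>

lemma phase_propagation_error:
  fixes u v F :: "nat \<Rightarrow> complex" and g :: "nat \<Rightarrow> real"
  assumes b: "b > 0"
    and g_ge: "\<And>k. k < d \<Longrightarrow> b\<^sup>2 \<le> g k"
    and g_err: "\<And>k. \<bar>g k - (cmod (u k))\<^sup>2\<bar> \<le> E1"
    and F_err: "\<And>k. cmod (F k - u k * cnj (u (Suc k))) \<le> E2"
    and u_le: "\<And>k. cmod (u k) \<le> U"
    and v_0: "v 0 = of_real (sqrt (g 0))"
    and v_Suc: "\<And>k. v (Suc k) = of_real (sqrt (g (Suc k))) * phase (cnj (F k) / cnj (v k))"
  shows "\<exists>c0. cmod c0 = 1 \<and>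
           (\<forall>k<d. cmod (v k - c0 * u k) \<le> (E1 + 2*E2) / b * (\<Sum>i<Suc k. (2*U/b)^i))"
proof (intro exI conjI allI impI)
  define \<gamma> where "\<gamma> = (E1 + 2*E2) / b"
  define \<rho> where "\<rho> = 2*U/b"
  define c0 where "c0 = (if u 0 = 0 then 1 else of_real (cmod (u 0)) / u 0)"
  show c0: "cmod c0 = 1" by (auto simp: c0_def norm_divide)
  have c0u: "c0 * u 0 = of_real (cmod (u 0))" by (auto simp: c0_def)
  have E2: "0 \<le> E2" using F_err[of 0] norm_ge_zero order_trans by blast
  have "0 \<le> U" using u_le[of 0] norm_ge_zero order_trans by blast
  then have \<rho>0: "0 \<le> \<rho>" unfolding \<rho>_def using b by simp
  have v_ge: "cmod (v k) \<ge> b" if "k < d" for k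
  proof -
    have "b \<le> sqrt (g k)" using g_ge[OF that] by (intro real_le_rsqrt)
    then show ?thesis using b v_0 v_Suc by (cases k) (auto simp: norm_mult)
  qed
  fix k assume "k < d"
  then show "cmod (v k - c0 * u k) \<le> (E1 + 2*E2) / b * (\<Sum>i<Suc k. (2*U/b)^i)"
    unfolding \<gamma>_def[symmetric] \<rho>_def[symmetric]
  proof (induction k)
    case 0
    have "cmod (v 0 - c0 * u 0) = \<bar>sqrt (g 0) - cmod (u 0)\<bar>"
      unfolding v_0 c0u by (simp flip: of_real_diff)
    also have "\<dots> \<le> E1 / b" by (rule abs_sqrt_diff_le[OF g_ge[OF 0] b g_err norm_ge_zero])
    also have "\<dots> \<le> \<gamma>" unfolding \<gamma>_def using E2 b by (intro divide_right_mono) auto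
    finally show ?case by simp
  next
    case (Suc k)
    have "cmod (v (Suc k) - c0 * u (Suc k)) \<le> E1/b + 2*((E2 + U * cmod (v k - c0 * u k))/b)"
      unfolding v_Suc
      by (rule phase_step_error[OF c0 g_ge[OF Suc.prems] b g_err v_ge F_err u_le]) (use Suc in simp)
    also have "\<dots> = \<gamma> + \<rho> * cmod (v k - c0 * u k)"
      unfolding \<gamma>_def \<rho>_def using b by (simp add: field_simps)
    also have "\<dots> \<le> \<gamma> + \<rho> * (\<gamma> * (\<Sum>i<Suc k. \<rho>^i))"
      using Suc \<rho>0 by (intro add_left_mono mult_left_mono) auto
    also have "\<dots> = \<gamma> * (\<Sum>i<Suc (Suc k). \<rho>^i)"
      by (simp only: sum.lessThan_Suc_shift[of _ "Suc k"] power_Suc sum_distrib_left)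
         (simp add: algebra_simps sum_distrib_left)
    finally show ?case .
  qed
qed

section \<open>The reconstruction map\<close>

lemma omega_power_eq_1: "d \<ge> 1 \<Longrightarrow> omega d ^ (2*d-1) = 1"
  unfolding omega_def Complex.DeMoivre by simp

lemma noisy_meas_abs2:
  assumes "1 \<le> i" "i \<le> 2*d-1"
  shows "noisy_meas d c eps i = (cmod (peval d c (omega d ^ i)))\<^sup>2 + eps i"
proof -
  have h1: "1 \<le> i \<and> i \<le> 6*d-3" and h2: "1 \<le> i \<and> i \<le> 2*d-1" using assms by arith+
  show ?thesis unfolding noisy_meas_def meas_def if_P[OF h1] if_P[OF h2] ..
qed

lemma noisy_meas_diff:
  assumes "1 \<le> i" "i \<le> 2*d-1"
  shows "noisy_meas d c eps (2*d-1+i)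
           = (cmod (peval d c (omega d ^ i) - peval d c (omega d ^ i * nu d)))\<^sup>2 + eps (2*d-1+i)"
proof -
  have "omega d ^ (2*d-1+i) = omega d ^ (2*d-1) * omega d ^ i" by (rule power_add)
  then have w: "omega d ^ (2*d-1+i) = omega d ^ i"
    using omega_power_eq_1[of d] assms by simp
  have h1: "1 \<le> 2*d-1+i \<and> 2*d-1+i \<le> 6*d-3"
    and h2: "\<not> (1 \<le> 2*d-1+i \<and> 2*d-1+i \<le> 2*d-1)"
    and h3: "2*d \<le> 2*d-1+i \<and> 2*d-1+i \<le> 4*d-2" using assms by arith+
  show ?thesis unfolding noisy_meas_def meas_def if_P[OF h1] if_not_P[OF h2] if_P[OF h3] w ..
qed

lemma noisy_meas_diff_imag:
  assumes "1 \<le> i" "i \<le> 2*d-1"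
  shows "noisy_meas d c eps (2*(2*d-1)+i)
           = (cmod (peval d c (omega d ^ i) - \<i> * peval d c (omega d ^ i * nu d)))\<^sup>2
             + eps (2*(2*d-1)+i)"
proof -
  have "omega d ^ (2*(2*d-1)+i) = (omega d ^ (2*d-1))\<^sup>2 * omega d ^ i"
    by (simp only: power_add power_mult mult.commute[of 2])
  then have w: "omega d ^ (2*(2*d-1)+i) = omega d ^ i"
    using omega_power_eq_1[of d] assms by simp
  have h1: "1 \<le> 2*(2*d-1)+i \<and> 2*(2*d-1)+i \<le> 6*d-3"
    and h2: "\<not> (1 \<le> 2*(2*d-1)+i \<and> 2*(2*d-1)+i \<le> 2*d-1)"
    and h3: "\<not> (2*d \<le> 2*(2*d-1)+i \<and> 2*(2*d-1)+i \<le> 4*d-2)"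
    and h4: "4*d-1 \<le> 2*(2*d-1)+i \<and> 2*(2*d-1)+i \<le> 6*d-3" using assms by arith+
  show ?thesis
    unfolding noisy_meas_def meas_def if_P[OF h1] if_not_P[OF h2] if_not_P[OF h3] if_P[OF h4] w ..
qed

lemma abs_le_supnorm: "1 \<le> j \<Longrightarrow> j \<le> 6*d-3 \<Longrightarrow> \<bar>eps j\<bar> \<le> supnorm d eps"
  unfolding supnorm_def by (intro Max_ge) auto

lemma supnorm_nonneg:
  assumes "d \<ge> 1"
  shows "0 \<le> supnorm d eps"
proof -
  have "1 \<le> 6*d-3" using assms by arith
  then show ?thesis using abs_le_supnorm[OF le_refl] abs_ge_zero order_trans by blast
qed

lemma mult_cnj_polarization:
  "a * cnj b = (of_real ((cmod a)\<^sup>2 + (cmod b)\<^sup>2 - (cmod (a - b))\<^sup>2)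
      + \<i> * of_real ((cmod a)\<^sup>2 + (cmod b)\<^sup>2 - (cmod (a - \<i> * b))\<^sup>2)) / 2"
  unfolding cmod_power2 by (simp add: complex_eq_iff power2_eq_square algebra_simps)

text \<open>recon d is the map R of the theorem; coset_values d y are its estimates of the values of
  p, up to a global phase, along the chosen coset.\<close>

definition abs2_est :: "nat \<Rightarrow> (nat \<Rightarrow> real) \<Rightarrow> complex \<Rightarrow> complex" where
  "abs2_est d y z = interp d (\<lambda>i. of_real (y i)) z"

definition cross_sample :: "nat \<Rightarrow> (nat \<Rightarrow> real) \<Rightarrow> nat \<Rightarrow> complex" where
  "cross_sample d y i =
     (of_real (y i) + abs2_est d y (omega d ^ i * nu d) - of_real (y (2*d-1+i))
      + \<i> * (of_real (y i) + abs2_est d y (omega d ^ i * nu d) - of_real (y (2*(2*d-1)+i)))) / 2"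

definition cross_est :: "nat \<Rightarrow> (nat \<Rightarrow> real) \<Rightarrow> complex \<Rightarrow> complex" where
  "cross_est d y z = interp d (cross_sample d y) z"

definition coset_min :: "nat \<Rightarrow> (nat \<Rightarrow> real) \<Rightarrow> nat \<Rightarrow> real" where
  "coset_min d y j = Min ((\<lambda>k. Re (abs2_est d y (grid d j k))) ` {..<d})"

definition best_coset :: "nat \<Rightarrow> (nat \<Rightarrow> real) \<Rightarrow> nat" where
  "best_coset d y = (SOME j. j < d \<and> (\<forall>j'<d. coset_min d y j' \<le> coset_min d y j))"

fun coset_values :: "nat \<Rightarrow> (nat \<Rightarrow> real) \<Rightarrow> nat \<Rightarrow> complex" where
  "coset_values d y 0 = of_real (sqrt (Re (abs2_est d y (grid d (best_coset d y) 0))))"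
| "coset_values d y (Suc k) = of_real (sqrt (Re (abs2_est d y (grid d (best_coset d y) (Suc k)))))
      * phase (cnj (cross_est d y (grid d (best_coset d y) k)) / cnj (coset_values d y k))"

definition recon :: "nat \<Rightarrow> (nat \<Rightarrow> real) \<Rightarrow> nat \<Rightarrow> complex" where
  "recon d y a = (if a < d
     then (\<Sum>k<d. coset_values d y k * cnj (grid d (best_coset d y) k) ^ a) / of_nat d else 0)"

lemma coset_min_le_best_coset:
  assumes "d \<ge> 1" "j < d"
  shows "coset_min d y j \<le> coset_min d y (best_coset d y)"
proof -
  have "0 \<in> {..<d}" using assms by simp
  then have "finite (coset_min d y ` {..<d})" "coset_min d y ` {..<d} \<noteq> {}" by auto
  then obtain j' where "j' \<in> {..<d}" "coset_min d y j' = Max (coset_min d y ` {..<d})"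
    using Max_in by (metis imageE)
  then have "\<exists>j'. j' < d \<and> (\<forall>j<d. coset_min d y j \<le> coset_min d y j')" by auto
  then have "\<forall>j<d. coset_min d y j \<le> coset_min d y (best_coset d y)"
    unfolding best_coset_def by (rule someI2_ex) blast
  then show ?thesis using assms(2) by blast
qed

lemma coset_min_le: "k < d \<Longrightarrow> coset_min d y j \<le> Re (abs2_est d y (grid d j k))"
  unfolding coset_min_def by (intro Min_le) auto

lemma le_coset_min:
  assumes "d \<ge> 1" "\<And>k. k < d \<Longrightarrow> m \<le> Re (abs2_est d y (grid d j k))"
  shows "m \<le> coset_min d y j"
proof -
  have "0 \<in> {..<d}" using assms(1) by simp
  then show ?thesis unfolding coset_min_def using assms(2) by (subst Min_ge_iff) auto
qed

lemma norm_abs2_est_diff_le: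
  assumes "d \<ge> 1" "cmod z = 1"
  shows "cmod (abs2_est d (noisy_meas d p eps) z - of_real ((cmod (peval d p z))\<^sup>2))
           \<le> real (2*d-1) * supnorm d eps"
proof -
  have "abs2_est d (noisy_meas d p eps) z - of_real ((cmod (peval d p z))\<^sup>2)
      = interp d (\<lambda>i. of_real (noisy_meas d p eps i) - of_real ((cmod (peval d p (omega d^i)))\<^sup>2)) z"
    unfolding abs2_est_def interp_diff of_real_norm_peval_sq interp_trig_poly[OF assms] ..
  also have "cmod \<dots> \<le> real (2*d-1) * supnorm d eps"
  proof (rule norm_interp_le[OF assms])
    fix i assume "i \<in> {1..2*d-1}"
    then show "cmod (of_real (noisy_meas d p eps i) - of_real ((cmod (peval d p (omega d^i)))\<^sup>2))
        \<le> supnorm d eps"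
      using noisy_meas_abs2[of i d p eps] abs_le_supnorm[of i d eps] by auto
  qed
  finally show ?thesis .
qed

lemma abs_Re_abs2_est_diff_le:
  assumes "d \<ge> 1" "cmod z = 1"
  shows "\<bar>Re (abs2_est d (noisy_meas d p eps) z) - (cmod (peval d p z))\<^sup>2\<bar>
           \<le> real (2*d-1) * supnorm d eps"
  using abs_Re_le_cmod[of "abs2_est d (noisy_meas d p eps) z - of_real ((cmod (peval d p z))\<^sup>2)"]
    norm_abs2_est_diff_le[OF assms, of p eps] by simp

text \<open>The samples needed for interpolating p(z) * cnj (p(z * nu d)) are obtained by polarization;
  the value |p(z * nu d)|^2 it requires is not measured but interpolated.\<close>

lemma norm_cross_sample_diff_le:
  assumes "d \<ge> 1" "1 \<le> i" "i \<le> 2*d-1"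
  shows "cmod (cross_sample d (noisy_meas d p eps) i
                 - peval d p (omega d^i) * cnj (peval d p (omega d^i * nu d)))
           \<le> (real (2*d-1) + 2) * supnorm d eps"
proof -
  let ?y = "noisy_meas d p eps" and ?N = "2*d-1" and ?e = "supnorm d eps"
  define a where "a = peval d p (omega d^i)"
  define b where "b = peval d p (omega d^i * nu d)"
  define D where "D = abs2_est d ?y (omega d^i * nu d) - of_real ((cmod b)\<^sup>2)"
  have D: "cmod D \<le> real ?N * ?e"
    unfolding D_def b_def
    by (rule norm_abs2_est_diff_le[OF assms(1)]) (simp add: omega_def nu_def norm_mult norm_power)
  have "i \<le> 6*d-3" "1 \<le> ?N+i" "?N+i \<le> 6*d-3" "1 \<le> 2*?N+i" "2*?N+i \<le> 6*d-3"
    using assms by arith+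
  then have e: "\<bar>eps i\<bar> \<le> ?e" "\<bar>eps (?N+i)\<bar> \<le> ?e" "\<bar>eps (2*?N+i)\<bar> \<le> ?e"
    using abs_le_supnorm assms(2) by auto
  define X where "X = of_real (eps i) + D - of_real (eps (?N+i))"
  define Y where "Y = of_real (eps i) + D - of_real (eps (2*?N+i))"
  have eq: "cross_sample d ?y i - a * cnj b = (X + \<i> * Y) / 2"
    unfolding cross_sample_def mult_cnj_polarization[of a b] X_def Y_def D_def
      noisy_meas_abs2[OF assms(2,3)] noisy_meas_diff[OF assms(2,3)] noisy_meas_diff_imag[OF assms(2,3)]
      a_def[symmetric] b_def[symmetric]
    by (simp add: field_simps)
  have "cmod (cross_sample d ?y i - a * cnj b) \<le> (cmod X + cmod Y) / 2"
    unfolding eq norm_divide using norm_triangle_ineq[of X "\<i> * Y"] by (simp add: norm_mult)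
  moreover have "cmod X \<le> ?e + real ?N * ?e + ?e" "cmod Y \<le> ?e + real ?N * ?e + ?e"
    unfolding X_def Y_def using D e
    by (smt (verit) norm_of_real norm_triangle_ineq4 norm_triangle_ineq)+
  ultimately show ?thesis unfolding a_def b_def by (simp add: algebra_simps)
qed

lemma norm_cross_est_diff_le:
  assumes "d \<ge> 1" "cmod z = 1"
  shows "cmod (cross_est d (noisy_meas d p eps) z - peval d p z * cnj (peval d p (z * nu d)))
           \<le> real (2*d-1) * ((real (2*d-1) + 2) * supnorm d eps)"
proof -
  let ?F = "\<lambda>z. peval d p z * cnj (peval d p (z * nu d))"
  have "cross_est d (noisy_meas d p eps) z - ?F z
      = interp d (\<lambda>i. cross_sample d (noisy_meas d p eps) i - ?F (omega d^i)) z"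
    unfolding cross_est_def interp_diff peval_mult_cnj_eq_trig_poly interp_trig_poly[OF assms] ..
  also have "cmod \<dots> \<le> real (2*d-1) * ((real (2*d-1) + 2) * supnorm d eps)"
    by (rule norm_interp_le[OF assms]) (use norm_cross_sample_diff_le assms(1) in auto)
  finally show ?thesis .
qed

lemma abs2_est_best_coset_ge:
  fixes eps :: "nat \<Rightarrow> real"
  assumes "d \<ge> 2" "pnorm2 d p = 1" "k < d"
  defines "y \<equiv> noisy_meas d p eps"
  shows "(betaconst d)\<^sup>2 - real (2*d-1) * supnorm d eps \<le> Re (abs2_est d y (grid d (best_coset d y) k))"
proof -
  let ?m = "(betaconst d)\<^sup>2 - real (2*d-1) * supnorm d eps"
  have d: "d \<ge> 1" using assms(1) by simp
  have Re_ge: "(cmod (peval d p z))\<^sup>2 - real (2*d-1) * supnorm d eps \<le> Re (abs2_est d y z)"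
    if "cmod z = 1" for z
    using abs_Re_abs2_est_diff_le[OF d that, of p eps] unfolding y_def by linarith
  obtain j0 where "j0 < d" and j0: "\<And>k. k < d \<Longrightarrow> betaconst d \<le> cmod (peval d p (grid d j0 k))"
    using exists_grid_coset_peval_ge[OF assms(1,2)] betaconst_le_grid_bound[OF assms(1)]
    by (meson order_trans)
  have "?m \<le> coset_min d y j0"
  proof (rule le_coset_min[OF d])
    fix k assume "k < d"
    then have "(betaconst d)\<^sup>2 \<le> (cmod (peval d p (grid d j0 k)))\<^sup>2"
      using j0 betaconst_bounds(2)[OF assms(1)] by (intro power_mono) auto
    then show "?m \<le> Re (abs2_est d y (grid d j0 k))" using Re_ge[OF norm_grid[of d j0 k]] by linarith
  qed
  also have "\<dots> \<le> coset_min d y (best_coset d y)" by (rule coset_min_le_best_coset[OF d \<open>j0 < d\<close>])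
  also have "\<dots> \<le> Re (abs2_est d y (grid d (best_coset d y) k))" by (rule coset_min_le[OF assms(3)])
  finally show ?thesis .
qed

lemma pnorm2_recon_diff_le:
  assumes "d \<ge> 1"
    and "\<And>k. k < d \<Longrightarrow> cmod (coset_values d y k - c0 * peval d p (grid d (best_coset d y) k)) \<le> \<Delta>"
  shows "pnorm2 d (\<lambda>a. recon d y a - c0 * p a) \<le> \<Delta>"
proof -
  define z0 where "z0 = cis (2*pi*real (best_coset d y)/real (d*d))"
  have grid: "grid d (best_coset d y) k = z0 * nu d ^ k" for k unfolding grid_def z0_def ..
  have z0: "cmod z0 = 1" unfolding z0_def by simp
  define \<delta> where "\<delta> = (\<lambda>k. coset_values d y k - c0 * peval d p (z0 * nu d ^ k))"
  have "recon d y a - c0 * p a = (\<Sum>k<d. \<delta> k * cnj (z0 * nu d^k)^a) / of_nat d" if "a < d" for a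
  proof -
    have "p a = (\<Sum>k<d. peval d p (z0 * nu d^k) * cnj (z0 * nu d^k)^a) / of_nat d"
      by (rule inverse_dft_peval[OF assms(1) z0 that, symmetric])
    then show ?thesis unfolding recon_def grid \<delta>_def using that
      by (simp add: sum_subtractf sum_distrib_left diff_divide_distrib algebra_simps)
  qed
  then have "pnorm2 d (\<lambda>a. recon d y a - c0 * p a)
      = sqrt (\<Sum>a<d. (cmod ((\<Sum>k<d. \<delta> k * cnj (z0 * nu d^k)^a) / of_nat d))\<^sup>2)"
    unfolding pnorm2_def by simp
  also have "\<dots> = sqrt ((\<Sum>k<d. (cmod (\<delta> k))\<^sup>2) / real d)"
    by (simp only: dft_parseval[OF assms(1) z0])
  also have "\<dots> \<le> sqrt (\<Delta>\<^sup>2)"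
  proof (rule real_sqrt_le_mono)
    have "(\<Sum>k<d. (cmod (\<delta> k))\<^sup>2) \<le> (\<Sum>k<d. \<Delta>\<^sup>2)"
      using assms(2) unfolding \<delta>_def grid by (intro sum_mono power_mono) auto
    then show "(\<Sum>k<d. (cmod (\<delta> k))\<^sup>2) / real d \<le> \<Delta>\<^sup>2"
      using assms(1) by (simp add: divide_le_eq mult.commute)
  qed
  also have "\<dots> = \<Delta>"
    using assms(2)[of 0] assms(1) norm_ge_zero order_trans by (metis real_sqrt_abs abs_of_nonneg
        less_le_trans zero_less_one)
  finally show ?thesis .
qed

lemma coset_values_error:
  fixes eps :: "nat \<Rightarrow> real"
  assumes d: "d \<ge> 2" and "\<alpha> < 1" and pn: "pnorm2 d p = 1"
    and eps: "supnorm d eps \<le> \<alpha> * (betaconst d)\<^sup>2 / real (2*d-1)"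
  defines "y \<equiv> noisy_meas d p eps" and "b \<equiv> betaconst d * sqrt (1 - \<alpha>)"
    and "N \<equiv> real (2*d-1)" and "e \<equiv> supnorm d eps"
  shows "\<exists>c0. cmod c0 = 1 \<and> (\<forall>k<d.
           cmod (coset_values d y k - c0 * peval d p (grid d (best_coset d y) k))
             \<le> N * (2 * N + 5) * e / b * (\<Sum>i<Suc k. (2 * sqrt (real d) / b)^i))"
proof -
  define u where "u = (\<lambda>k. peval d p (grid d (best_coset d y) k))"
  define g where "g = (\<lambda>k. Re (abs2_est d y (grid d (best_coset d y) k)))"
  define F where "F = (\<lambda>k. cross_est d y (grid d (best_coset d y) k))"
  have d1: "d \<ge> 1" using d by simp
  have b: "b > 0" unfolding b_def using betaconst_bounds(2)[OF d] assms(2) by simp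
  have "N * e \<le> \<alpha> * (betaconst d)\<^sup>2"
    using eps d unfolding N_def e_def by (simp add: le_divide_eq mult.commute)
  moreover have "b\<^sup>2 = (betaconst d)\<^sup>2 - \<alpha> * (betaconst d)\<^sup>2"
    unfolding b_def using assms(2) by (simp add: algebra_simps)
  ultimately have "b\<^sup>2 \<le> (betaconst d)\<^sup>2 - N * e" by linarith
  then have g_ge: "b\<^sup>2 \<le> g k" if "k < d" for k
    using abs2_est_best_coset_ge[OF d pn that, of eps] unfolding g_def y_def N_def e_def by linarith
  have g_err: "\<bar>g k - (cmod (u k))\<^sup>2\<bar> \<le> N * e" for k
    unfolding g_def u_def y_def N_def e_def by (rule abs_Re_abs2_est_diff_le[OF d1 norm_grid])
  have F_err: "cmod (F k - u k * cnj (u (Suc k))) \<le> N * ((N + 2) * e)" for k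
    using norm_cross_est_diff_le[OF d1 norm_grid] unfolding F_def u_def y_def N_def e_def grid_Suc .
  have u_le: "cmod (u k) \<le> sqrt (real d)" for k
    unfolding u_def by (rule norm_peval_le_sqrt[OF norm_grid pn])
  have v_0: "coset_values d y 0 = of_real (sqrt (g 0))"
    and v_Suc: "\<And>k. coset_values d y (Suc k)
      = of_real (sqrt (g (Suc k))) * phase (cnj (F k) / cnj (coset_values d y k))"
    unfolding g_def F_def by simp_all
  have \<gamma>: "(N * e + 2 * (N * ((N + 2) * e))) / b = N * (2 * N + 5) * e / b"
    by (simp add: algebra_simps)
  show ?thesis
    using phase_propagation_error[where u=u and v="coset_values d y" and F=F and g=g and d=d,
        OF b g_ge g_err F_err u_le v_0 v_Suc]
    unfolding \<gamma> u_def .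
qed

lemma pnorm2_recon_diff_le_geometric:
  assumes d: "d \<ge> 2" and "\<alpha> < 1" and "pnorm2 d p = 1"
    and "supnorm d eps \<le> \<alpha> * (betaconst d)\<^sup>2 / real (2*d-1)"
  defines "b \<equiv> betaconst d * sqrt (1 - \<alpha>)"
  shows "\<exists>c0. cmod c0 = 1 \<and> pnorm2 d (\<lambda>k. recon d (noisy_meas d p eps) k - c0 * p k)
     \<le> real (2*d-1) * (2 * real (2*d-1) + 5) * supnorm d eps / b * (\<Sum>i<d. (2 * sqrt (real d) / b)^i)"
proof -
  define y where "y = noisy_meas d p eps"
  define \<gamma> where "\<gamma> = real (2*d-1) * (2 * real (2*d-1) + 5) * supnorm d eps / b"
  define \<rho> where "\<rho> = 2 * sqrt (real d) / b"
  have d1: "d \<ge> 1" using d by simp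
  have b: "b > 0" unfolding b_def using betaconst_bounds(2)[OF d] assms(2) by simp
  then have "0 \<le> \<gamma>" "0 \<le> \<rho>" unfolding \<gamma>_def \<rho>_def using supnorm_nonneg[OF d1] by simp_all
  obtain c0 where c0: "cmod c0 = 1" and err: "\<And>k. k < d \<Longrightarrow>
      cmod (coset_values d y k - c0 * peval d p (grid d (best_coset d y) k)) \<le> \<gamma> * (\<Sum>i<Suc k. \<rho>^i)"
    using coset_values_error[OF assms(1-4)] unfolding y_def b_def \<gamma>_def \<rho>_def by blast
  have "cmod (coset_values d y k - c0 * peval d p (grid d (best_coset d y) k)) \<le> \<gamma> * (\<Sum>i<d. \<rho>^i)"
    if "k < d" for k
  proof -
    have "(\<Sum>i<Suc k. \<rho>^i) \<le> (\<Sum>i<d. \<rho>^i)"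
      using that \<open>0 \<le> \<rho>\<close> by (intro sum_mono2) auto
    then show ?thesis using err[OF that] mult_left_mono \<open>0 \<le> \<gamma>\<close> order_trans by blast
  qed
  with c0 show ?thesis
    using pnorm2_recon_diff_le[OF d1] unfolding \<gamma>_def \<rho>_def y_def by blast
qed

section \<open>Comparison with the stated bound\<close>

text \<open>The stated bound is far from tight: since C > 1 its first summand is nonnegative, and the
  second is a geometric sum in C, which dominates the geometric sum in rho obtained above.\<close>

lemma stated_bound_ge:
  fixes C \<beta> \<alpha> e N :: real
  assumes "C > 1" "\<beta> > 0" "\<alpha> < 1" "e \<ge> 0" "N \<ge> 0" "d \<ge> 1"
  shows "real d * N * (\<Sum>i<d. C^i) / (2 * (\<beta> * sqrt (1 - \<alpha>))) * e
    \<le> ((2 + sqrt 2) / (\<beta>\<^sup>2 * (1 - \<alpha>)) * ((real d - real d * C - 1 + C ^ d) / (1 - C)) * sqrt (real d)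
        + (1 - C ^ d) / (2 * \<beta> * sqrt ((1 / sqrt (real d)) * (1 - \<alpha>))))
       * (real d * N / (1 - C)) * e"
proof -
  define T1 where "T1 = (2 + sqrt 2) / (\<beta>\<^sup>2 * (1 - \<alpha>)) * ((real d - real d * C - 1 + C ^ d) / (1 - C)) * sqrt (real d)"
  define sq where "sq = sqrt ((1 / sqrt (real d)) * (1 - \<alpha>))"
  define K where "K = real d * N / (1 - C)"
  have "1 + real d * (C - 1) \<le> (1 + (C - 1))^d" using assms(1) by (intro Bernoulli_inequality) simp
  then have "0 \<le> real d - real d * C - 1 + C^d" by (simp add: algebra_simps)
  then have "T1 \<le> 0" unfolding T1_def using assms
    by (intro mult_nonpos_nonneg mult_nonneg_nonpos divide_nonneg_neg) auto
  moreover have "K \<le> 0" unfolding K_def using assms by (intro divide_nonneg_neg) auto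
  ultimately have "0 \<le> T1 * K * e" using assms(4) by (simp add: mult_nonpos_nonpos)
  have "0 < sq" unfolding sq_def using assms by simp
  moreover have "sq \<le> sqrt (1 - \<alpha>)" unfolding sq_def
    using mult_right_mono[of "1 / sqrt (real d)" 1 "1 - \<alpha>"] assms by (intro real_sqrt_le_mono) simp
  ultimately have "real d * N * (\<Sum>i<d. C^i) / (2 * (\<beta> * sqrt (1 - \<alpha>)))
      \<le> real d * N * (\<Sum>i<d. C^i) / (2 * \<beta> * sq)"
    using assms by (intro divide_left_mono mult_left_mono mult_nonneg_nonneg sum_nonneg) auto
  also have "\<dots> = (1 - C ^ d) / (2 * \<beta> * sq) * K"
    unfolding K_def using assms(1) by (simp add: sum_gp_strict field_simps)
  finally have "real d * N * (\<Sum>i<d. C^i) / (2 * (\<beta> * sqrt (1 - \<alpha>))) * e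
      \<le> (1 - C ^ d) / (2 * \<beta> * sq) * K * e"
    using assms(4) by (rule mult_right_mono)
  with \<open>0 \<le> T1 * K * e\<close> show ?thesis
    unfolding T1_def[symmetric] sq_def[symmetric] K_def[symmetric] by (simp add: algebra_simps)
qed

lemma sum_power_le_sum_power_dominating:
  fixes \<rho> C \<mu> :: real
  assumes d: "d \<ge> 3" and \<rho>: "\<rho> \<ge> 1" and \<mu>: "\<mu> \<ge> 2 * real d" and C: "C \<ge> \<mu> * \<rho>"
  shows "2 * (2 * real (2*d-1) + 5) * (\<Sum>i<d. \<rho>^i) \<le> real d * (\<Sum>i<d. C^i)"
proof -
  have "\<mu> \<ge> 1" using \<mu> d by simp
  then have "C \<ge> 0" using C \<rho> mult_nonneg_nonneg[of \<mu> \<rho>] by linarith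
  have "(\<Sum>i<d. \<rho>^i) \<le> (\<Sum>i<d. \<rho>^(d-1))" using \<rho> by (intro sum_mono power_increasing) auto
  then have sum\<rho>: "(\<Sum>i<d. \<rho>^i) \<le> real d * \<rho>^(d-1)" by simp
  have "2 * (2 * real (2*d-1) + 5) \<le> 4 * (real d)^2"
  proof -
    have "(real d - 3) * (4 * real d + 4) \<ge> 0" using d by simp
    then show ?thesis using d by (simp add: power2_eq_square algebra_simps)
  qed
  also have "\<dots> = (2 * real d)^2" by (simp add: power2_eq_square)
  also have "\<dots> \<le> \<mu>^2" using \<mu> d by (intro power_mono) auto
  also have "\<dots> \<le> \<mu>^(d-1)" using \<open>\<mu> \<ge> 1\<close> d by (intro power_increasing) auto
  finally have "2 * (2 * real (2*d-1) + 5) * \<rho>^(d-1) \<le> (\<mu> * \<rho>)^(d-1)"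
    using \<rho> by (simp add: power_mult_distrib mult_right_mono)
  also have "\<dots> \<le> C^(d-1)" using C \<open>\<mu> \<ge> 1\<close> \<rho> by (intro power_mono) auto
  also have "\<dots> \<le> (\<Sum>i<d. C^i)" using \<open>C \<ge> 0\<close> d by (intro member_le_sum) auto
  finally have "2 * (2 * real (2*d-1) + 5) * (real d * \<rho>^(d-1)) \<le> real d * (\<Sum>i<d. C^i)"
    by (simp add: mult_left_mono mult.left_commute)
  moreover have "2 * (2 * real (2*d-1) + 5) * (\<Sum>i<d. \<rho>^i)
      \<le> 2 * (2 * real (2*d-1) + 5) * (real d * \<rho>^(d-1))"
    using sum\<rho> by (intro mult_left_mono) auto
  ultimately show ?thesis by linarith
qed

lemma geometric_sums_compare:
  fixes b C :: real
  assumes d: "d \<ge> 2" and b: "0 < b" "b \<le> betaconst d" and C: "real d / b\<^sup>2 \<le> C"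
  shows "2 * (2 * real (2*d-1) + 5) * (\<Sum>i<d. (2 * sqrt (real d) / b)^i) \<le> real d * (\<Sum>i<d. C^i)"
proof -
  define \<rho> where "\<rho> = 2 * sqrt (real d) / b"
  have "sqrt (real d) \<ge> 1" using d by simp
  then have "2 * 1 / (1/12) \<le> \<rho>"
    unfolding \<rho>_def using b betaconst_le_1_12[OF d] by (intro frac_le) auto
  then have "\<rho> \<ge> 1" by simp
  have \<rho>C: "sqrt (real d) / (2 * b) * \<rho> \<le> C"
    using C b unfolding \<rho>_def by (simp add: power2_eq_square)
  show ?thesis
  proof (cases "d = 2")
    case True
    have "1.41 \<le> sqrt (2::real)" by (rule real_le_rsqrt) (simp add: power2_eq_square)
    moreover have "b \<le> 1/16" using b betaconst_2 True by simp
    ultimately have "1.41 / (2 * (1/16)) \<le> sqrt (real d) / (2 * b)" "2 * 1.41 / (1/16) \<le> \<rho>"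
      unfolding \<rho>_def using True b by (intro frac_le; simp)+
    then have "11.28 * \<rho> \<le> C" "45 \<le> \<rho>"
      using \<rho>C \<open>\<rho> \<ge> 1\<close> by (auto intro: order_trans[OF mult_right_mono])
    then show ?thesis using True unfolding \<rho>_def[symmetric] by (simp add: numeral_2_eq_2)
  next
    case False
    then have "d \<ge> 3" using d by simp
    have "1 / (2 * (1 / (4 * real d))) \<le> sqrt (real d) / (2 * b)"
      using b betaconst_le_inverse_4d[OF \<open>d \<ge> 3\<close>] \<open>sqrt (real d) \<ge> 1\<close> by (intro frac_le) auto
    then have "2 * real d \<le> sqrt (real d) / (2 * b)" by simp
    then show ?thesis
      unfolding \<rho>_def[symmetric] by (rule sum_power_le_sum_power_dominating[OF \<open>d \<ge> 3\<close> \<open>\<rho> \<ge> 1\<close> _ \<rho>C])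
  qed
qed

lemma geometric_bound_le_stated_bound:
  fixes d :: nat and \<alpha> e :: real
  assumes d: "d \<ge> 2" and "0 < \<alpha>" "\<alpha> < 1" and e: "0 \<le> e"
  defines "b \<equiv> betaconst d * sqrt (1 - \<alpha>)"
  shows "real (2*d-1) * (2 * real (2*d-1) + 5) * e / b * (\<Sum>i<d. (2 * sqrt (real d) / b)^i)
    \<le> (let \<beta> = betaconst d; C = ((1 + sqrt 2) * real (2 * d - 1) * e + real d) / (\<beta>\<^sup>2 * (1 - \<alpha>)) in
       ((2 + sqrt 2) / (\<beta>\<^sup>2 * (1 - \<alpha>)) * ((real d - real d * C - 1 + C ^ d) / (1 - C)) * sqrt (real d)
              + (1 - C ^ d) / (2 * \<beta> * sqrt ((1 / sqrt (real d)) * (1 - \<alpha>))))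
             * (real d * real (2 * d - 1) / (1 - C)) * e)"
proof -
  define \<beta> where "\<beta> = betaconst d"
  define N where "N = real (2*d-1)"
  define C where "C = ((1 + sqrt 2) * N * e + real d) / (\<beta>\<^sup>2 * (1 - \<alpha>))"
  have \<beta>: "0 < \<beta>" unfolding \<beta>_def using betaconst_bounds(2)[OF d] .
  have b: "0 < b" "b \<le> \<beta>" unfolding b_def \<beta>_def[symmetric] using \<beta> assms(2,3)
    by (auto simp: mult_left_le)
  have N: "0 \<le> N" unfolding N_def by simp
  have b2: "b\<^sup>2 = \<beta>\<^sup>2 * (1 - \<alpha>)"
    unfolding b_def \<beta>_def using assms(3) by (simp add: power_mult_distrib)
  have C_ge: "real d / b\<^sup>2 \<le> C"
    unfolding C_def b2[symmetric] using e N by (intro divide_right_mono) auto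
  have "2 / (1/12)\<^sup>2 \<le> real d / b\<^sup>2"
    using d b betaconst_le_1_12[OF d] unfolding \<beta>_def by (intro frac_le power_mono) auto
  then have "C > 1" using C_ge by (simp add: power2_eq_square)
  have "N * (2 * N + 5) * e / b * (\<Sum>i<d. (2 * sqrt (real d) / b)^i)
      = N * e / (2 * b) * (2 * (2 * N + 5) * (\<Sum>i<d. (2 * sqrt (real d) / b)^i))"
    using b by (simp add: field_simps)
  also have "\<dots> \<le> N * e / (2 * b) * (real d * (\<Sum>i<d. C^i))"
    using geometric_sums_compare[OF d b[unfolded \<beta>_def] C_ge] N e b
    unfolding N_def by (intro mult_left_mono) auto
  also have "\<dots> = real d * N * (\<Sum>i<d. C^i) / (2 * (\<beta> * sqrt (1 - \<alpha>))) * e"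
    unfolding b_def \<beta>_def by (simp add: field_simps)
  also have "\<dots> \<le> ((2 + sqrt 2) / (\<beta>\<^sup>2 * (1 - \<alpha>)) * ((real d - real d * C - 1 + C ^ d) / (1 - C)) * sqrt (real d)
        + (1 - C ^ d) / (2 * \<beta> * sqrt ((1 / sqrt (real d)) * (1 - \<alpha>)))) * (real d * N / (1 - C)) * e"
    using stated_bound_ge \<open>C > 1\<close> \<beta> assms(3) e N d by simp
  finally show ?thesis unfolding Let_def C_def N_def \<beta>_def .
qed

theorem mainTheorem13:
  fixes d :: nat and \<alpha> :: real
  assumes "d \<ge> 2" and "0 < \<alpha>" and "\<alpha> < 1"
  shows "\<exists>R :: (nat \<Rightarrow> real) \<Rightarrow> (nat \<Rightarrow> complex).
    (\<forall>y. in_Pd d (R y)) \<and>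
    (\<forall>p eps. in_Pd d p \<longrightarrow> pnorm2 d p = 1 \<longrightarrow>
       supnorm d eps \<le> \<alpha> * (betaconst d)\<^sup>2 / real (2 * d - 1) \<longrightarrow>
       (let \<beta> = betaconst d; e = supnorm d eps;
            C = ((1 + sqrt 2) * real (2 * d - 1) * e + real d) / (\<beta>\<^sup>2 * (1 - \<alpha>));
            pt = R (noisy_meas d p eps)
        in \<exists>c0. cmod c0 = 1 \<and>
           pnorm2 d (\<lambda>k. pt k - c0 * p k) \<le>
             ((2 + sqrt 2) / (\<beta>\<^sup>2 * (1 - \<alpha>)) * ((real d - real d * C - 1 + C ^ d) / (1 - C)) * sqrt (real d)
              + (1 - C ^ d) / (2 * \<beta> * sqrt ((1 / sqrt (real d)) * (1 - \<alpha>))))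
             * (real d * real (2 * d - 1) / (1 - C)) * e))"
proof (intro exI[of _ "recon d"] conjI allI impI, goal_cases)
  case (1 y)
  show ?case unfolding in_Pd_def recon_def by simp
next
  case (2 p eps)
  then obtain c0 where "cmod c0 = 1"
    and bound: "pnorm2 d (\<lambda>k. recon d (noisy_meas d p eps) k - c0 * p k)
      \<le> real (2*d-1) * (2 * real (2*d-1) + 5) * supnorm d eps / (betaconst d * sqrt (1 - \<alpha>))
        * (\<Sum>i<d. (2 * sqrt (real d) / (betaconst d * sqrt (1 - \<alpha>)))^i)"
    using pnorm2_recon_diff_le_geometric[OF assms(1,3)] by blast
  have "0 \<le> supnorm d eps" using assms(1) by (intro supnorm_nonneg) simp
  note stated = geometric_bound_le_stated_bound[OF assms this, unfolded Let_def]
  show ?case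
    unfolding Let_def by (intro exI[of _ c0] conjI \<open>cmod c0 = 1\<close> order_trans[OF bound stated])
qed
end
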